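(* Let $X$, $Y$, $Z$ be positive, absolutely continuous random variables with densities $f_X$, $f_Y$, $f_Z$, such that $X$ and $Y$ are independent and $Z \stackrel{d}{=} X/(X+Y)$ (so $Z$ takes values in $(0,1)$). Suppose that the density of $Y$ admits the decomposition $$f_Y(sx)=\mathbb{A}(s)\,\mathbb{B}(x)\,\mathbb{C}(sx),\qquad x,s>0,$$ for some positive real-valued functions $\mathbb{A},\mathbb{B},\mathbb{C}$ on $(0,\infty)$, where $$\mathbb{C}(x)=(p+qx)\exp(-\lambda x),\qquad x>0,$$ for some constants $q,\lambda>0$ and $p\geq 0$. Then, whenever $\big[x^{(\lambda p/q)+2}\,\mathbb{B}(x)\,f_X(x)\big]\big|_{x=0^+}=0$ (i.e. this expression tends to $0$ as $x\to 0^+$), the density of $X$ is given, for $x>0$, by $$f_X(x)=\frac{\lambda^3}{q\,x^{(\lambda p/q)+2}\,\mathbb{B}(x)}\int_0^x \xi^{\lambda p/q}\,\mathcal{L}^{-1}\left\{\frac{1}{\mathbb{A}\!\left(\frac{s}{\lambda}\right)(s+\lambda)^2}\, f_Z\!\left(\frac{\lambda}{s+\lambda}\right)\right\}(\xi)\,\mathrm{d}\xi.$$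
   Context: $\mathcal{L}$ denotes the Laplace transform, $\mathcal{L}\{g\}(s)=\int_0^\infty e^{-st}g(t)\,\mathrm{d}t$, and $\mathcal{L}^{-1}$ denotes the inverse Laplace transform: $\mathcal{L}^{-1}\{F\}$ is the function $g$ on $(0,\infty)$ with $\mathcal{L}\{g\}=F$; $\mathcal{L}^{-1}\{F\}(\xi)$ means this function evaluated at $\xi$. The notation $\stackrel{d}{=}$ means equality in distribution. *)

theory Defs
  imports "HOL-Probability.Probability"
begin

text \<open>Thus "g = inverse Laplace transform of F".\<close>
definition has_laplace :: "(real \<Rightarrow> real) \<Rightarrow> (real \<Rightarrow> real) \<Rightarrow> bool" where
  "has_laplace g F \<longleftrightarrow>
     (\<forall>s>0. set_integrable lborel {0<..} (\<lambda>t. exp (- s * t) * g t) \<and>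
            (LINT t:{0<..}|lborel. exp (- s * t) * g t) = F s)"

end

theory Submission
  imports Defs
begin

text \<open>
  Write \<open>h = B \<cdot> f\<^sub>X\<close> and \<open>L\<close> for the Laplace transform. By independence, the density of
  \<open>T = \<lambda> Y / X\<close> at \<open>s > 0\<close> is \<open>\<integral> f\<^sub>X(x) f\<^sub>Y(s x / \<lambda>) x / \<lambda> dx\<close>, which by the decomposition of
  \<open>f\<^sub>Y\<close> equals \<open>A(s / \<lambda>) / \<lambda> \<cdot> (L[p \<xi> h](s) + (q s / \<lambda>) L[\<xi>\<^sup>2 h](s))\<close>; since \<open>T = \<lambda> (1 - Z) / Z\<close>
  it is also \<open>f\<^sub>Z(\<lambda> / (s + \<lambda>)) \<lambda> / (s + \<lambda>)\<^sup>2\<close>. With \<open>a = \<lambda> p / q\<close> this gives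
  \<open>L[a \<xi> h](s) + s L[\<xi>\<^sup>2 h](s) = (\<lambda>\<^sup>3 / q) L[g](s)\<close>. After division by \<open>s\<close> both sides are Laplace
  transforms, of \<open>t\<^sup>2 h(t) + \<integral>\<^sub>0\<^sup>t a \<xi> h(\<xi>) d\<xi>\<close> and of \<open>(\<lambda>\<^sup>3 / q) \<integral>\<^sub>0\<^sup>t g\<close>, so by Lerch's theorem these
  functions agree almost everywhere. Multiplying by \<open>a t\<^sup>a\<^sup>-\<^sup>1\<close> and integrating by parts solves this
  first-order integral equation: \<open>x\<^sup>a\<^sup>+\<^sup>2 h(x) = (\<lambda>\<^sup>3 / q) \<integral>\<^sub>0\<^sup>x \<xi>\<^sup>a g(\<xi>) d\<xi>\<close>.
\<close>


section \<open>Laplace transforms\<close>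

definition laplace_integrable :: "(real \<Rightarrow> real) \<Rightarrow> bool" where
  "laplace_integrable f \<longleftrightarrow> (\<forall>s>0. set_integrable lborel {0<..} (\<lambda>t. exp (- s * t) * f t))"

definition laplace :: "(real \<Rightarrow> real) \<Rightarrow> real \<Rightarrow> real" where
  "laplace f s = (LINT t:{0<..}|lborel. exp (- s * t) * f t)"

lemma laplace_integrableD:
  "laplace_integrable f \<Longrightarrow> s > 0 \<Longrightarrow> set_integrable lborel {0<..} (\<lambda>t. exp (- s * t) * f t)"
  by (simp add: laplace_integrable_def)

lemma has_laplace_iff: "has_laplace g F \<longleftrightarrow> laplace_integrable g \<and> (\<forall>s>0. laplace g s = F s)"
  by (auto simp: has_laplace_def laplace_integrable_def laplace_def)

lemma laplace_integrable_cmult: "laplace_integrable f \<Longrightarrow> laplace_integrable (\<lambda>t. c * f t)"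
  by (auto simp: laplace_integrable_def mult.left_commute[of _ c])

lemma laplace_cmult: "laplace (\<lambda>t. c * f t) s = c * laplace f s"
  by (simp add: laplace_def mult.left_commute[of _ c])

lemma laplace_integrable_add:
  "laplace_integrable f \<Longrightarrow> laplace_integrable g \<Longrightarrow> laplace_integrable (\<lambda>t. f t + g t)"
  by (auto simp: laplace_integrable_def distrib_left)

lemma laplace_add:
  assumes "laplace_integrable f" "laplace_integrable g" "s > 0"
  shows "laplace (\<lambda>t. f t + g t) s = laplace f s + laplace g s"
  using set_integral_add(2)[OF laplace_integrableD[OF assms(1,3)] laplace_integrableD[OF assms(2,3)]]
  by (simp add: laplace_def distrib_left)

lemma isCont_laplace:
  fixes f :: "real \<Rightarrow> real"
  assumes [measurable]: "f \<in> borel_measurable borel" and "laplace_integrable f" and "s0 > 0"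
  shows "isCont (laplace f) s0"
proof (rule continuous_at_sequentiallyI)
  fix s :: "nat \<Rightarrow> real"
  assume s: "s \<longlonglongrightarrow> s0"
  then obtain N where N: "\<And>n. n \<ge> N \<Longrightarrow> s n > s0 / 2"
    using \<open>s0 > 0\<close> order_tendstoD(1)[OF s, of "s0 / 2"] by (auto simp: eventually_sequentially)
  \<comment> \<open>dominated convergence with the majorant at \<open>s0 / 2\<close>\<close>
  let ?f = "\<lambda>r t. indicator {0<..} t *\<^sub>R (exp (- r * t) * f t)"
  have "(\<lambda>n. \<integral>t. ?f (s (n + N)) t \<partial>lborel) \<longlonglongrightarrow> (\<integral>t. ?f s0 t \<partial>lborel)"
  proof (rule integral_dominated_convergence[where w="\<lambda>t. norm (?f (s0 / 2) t)"])
    have "set_integrable lborel {0<..} (\<lambda>t. exp (- (s0 / 2) * t) * f t)"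
      using assms by (intro laplace_integrableD) auto
    then show "integrable lborel (\<lambda>t. norm (?f (s0 / 2) t))"
      unfolding set_integrable_def by (rule integrable_norm)
    show "AE t in lborel. (\<lambda>n. ?f (s (n + N)) t) \<longlonglongrightarrow> ?f s0 t"
      using LIMSEQ_ignore_initial_segment[OF s, of N] by (intro AE_I2 tendsto_intros)
    have "norm (?f (s (n + N)) t) \<le> norm (?f (s0 / 2) t)" for n t
      using N[of "n + N"] by (cases "t > 0") (auto simp: abs_mult intro!: mult_right_mono)
    then show "AE t in lborel. norm (?f (s (n + N)) t) \<le> norm (?f (s0 / 2) t)" for n
      by simp
  qed measurable
  then show "(\<lambda>n. laplace f (s n)) \<longlonglongrightarrow> laplace f s0"
    by (simp add: laplace_def set_lebesgue_integral_def LIMSEQ_offset[where k=N])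
qed

lemma AE_imp_ex_in_interval:
  assumes "AE x in lborel. P x" and "(a::real) < b"
  shows "\<exists>x\<in>{a<..<b}. P x"
proof (rule ccontr)
  obtain N where N: "{x. \<not> P x} \<subseteq> N" "emeasure lborel N = 0" "N \<in> sets lborel"
    using assms(1) by (auto elim!: AE_E)
  assume "\<not> (\<exists>x\<in>{a<..<b}. P x)"
  with N have "emeasure lborel {a<..<b} \<le> emeasure lborel N"
    by (intro emeasure_mono) auto
  then show False
    using N \<open>a < b\<close> by simp
qed

lemma set_integral_nonneg:
  fixes f :: "'a \<Rightarrow> real"
  assumes "\<And>x. x \<in> A \<Longrightarrow> 0 \<le> f x"
  shows "0 \<le> (LINT x:A|M. f x)"
  unfolding set_lebesgue_integral_def
  using assms by (intro Bochner_Integration.integral_nonneg) (auto simp: indicator_def)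

lemma nn_integral_eq_set_integral:
  fixes f :: "'a \<Rightarrow> real"
  assumes "set_integrable M A f" and "\<And>x. x \<in> A \<Longrightarrow> 0 \<le> f x"
  shows "(\<integral>\<^sup>+x. ennreal (f x) * indicator A x \<partial>M) = ennreal (LINT x:A|M. f x)"
proof -
  have "(\<integral>\<^sup>+x. ennreal (f x) * indicator A x \<partial>M) = (\<integral>\<^sup>+x. ennreal (indicator A x *\<^sub>R f x) \<partial>M)"
    by (intro nn_integral_cong) (simp add: indicator_def)
  also have "\<dots> = ennreal (LINT x:A|M. f x)"
    using assms unfolding set_lebesgue_integral_def set_integrable_def
    by (intro nn_integral_eq_integral) (auto simp: indicator_def)
  finally show ?thesis .
qed

lemma set_integral_if_nn_integral_eq:
  fixes f :: "'a \<Rightarrow> real"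
  assumes "set_borel_measurable M A f" and "\<And>x. x \<in> A \<Longrightarrow> 0 \<le> f x" and "0 \<le> r"
    and "(\<integral>\<^sup>+x. ennreal (f x) * indicator A x \<partial>M) = ennreal r"
  shows "set_integrable M A f" and "(LINT x:A|M. f x) = r"
proof -
  have "(\<integral>\<^sup>+x. ennreal (indicator A x *\<^sub>R f x) \<partial>M) = (\<integral>\<^sup>+x. ennreal (f x) * indicator A x \<partial>M)"
    by (intro nn_integral_cong) (simp add: indicator_def)
  then have "(\<integral>\<^sup>+x. ennreal (indicator A x *\<^sub>R f x) \<partial>M) = ennreal r"
    using assms(4) by simp
  then have "has_bochner_integral M (\<lambda>x. indicator A x *\<^sub>R f x) r"
    using assms(1-3)
    by (intro has_bochner_integral_nn_integral) (auto simp: set_borel_measurable_def indicator_def)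
  then show "set_integrable M A f" and "(LINT x:A|M. f x) = r"
    by (auto simp: set_integrable_def set_lebesgue_integral_def has_bochner_integral_iff)
qed

lemma set_integral_pos_neg_parts:
  fixes f :: "'a \<Rightarrow> real"
  assumes "set_integrable M A f"
  shows "set_integrable M A (\<lambda>x. max 0 (f x))" "set_integrable M A (\<lambda>x. max 0 (- f x))"
    and "(LINT x:A|M. f x) = (LINT x:A|M. max 0 (f x)) - (LINT x:A|M. max 0 (- f x))"
proof -
  have "integrable M (\<lambda>x. max 0 (indicator A x *\<^sub>R f x))" "integrable M (\<lambda>x. max 0 (- indicator A x *\<^sub>R f x))"
    using assms by (auto simp: set_integrable_def)
  moreover have "(\<lambda>x. indicator A x *\<^sub>R max 0 (f x)) = (\<lambda>x. max 0 (indicator A x *\<^sub>R f x))"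
    "(\<lambda>x. indicator A x *\<^sub>R max 0 (- f x)) = (\<lambda>x. max 0 (- indicator A x *\<^sub>R f x))"
    by (auto simp: indicator_def)
  ultimately show pos: "set_integrable M A (\<lambda>x. max 0 (f x))" and neg: "set_integrable M A (\<lambda>x. max 0 (- f x))"
    by (simp_all add: set_integrable_def)
  have "(LINT x:A|M. f x) = (LINT x:A|M. max 0 (f x) - max 0 (- f x))"
    by (rule arg_cong[where f = "set_lebesgue_integral M A"]) (auto simp: fun_eq_iff max_def)
  then show "(LINT x:A|M. f x) = (LINT x:A|M. max 0 (f x)) - (LINT x:A|M. max 0 (- f x))"
    using pos neg by simp
qed

lemma tendsto_nn_integral_incseq_indicator:
  fixes f :: "real \<Rightarrow> ennreal"
  assumes [measurable]: "f \<in> borel_measurable borel" "\<And>n. S n \<in> sets borel" and "incseq S"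
  shows "(\<lambda>n. \<integral>\<^sup>+x. f x * indicator (S n) x \<partial>lborel) \<longlonglongrightarrow> (\<integral>\<^sup>+x. f x * indicator (\<Union>n. S n) x \<partial>lborel)"
  using Lim_emeasure_incseq[of S "density lborel f"] \<open>incseq S\<close>
  by (simp add: emeasure_density image_subset_iff sets.countable_UN)

section \<open>Lerch's uniqueness theorem\<close>

lemma integrable_mult_comp_exp:
  fixes \<psi> F :: "real \<Rightarrow> real"
  assumes [measurable]: "\<psi> \<in> borel_measurable borel" "F \<in> borel_measurable borel"
    and "integrable lborel \<psi>" and supp: "\<And>t. t \<le> 0 \<Longrightarrow> \<psi> t = 0"
    and bound: "\<And>u. u \<in> {0..1} \<Longrightarrow> \<bar>F u\<bar> \<le> c"
  shows "integrable lborel (\<lambda>t. \<psi> t * F (exp (- t)))"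
proof (rule Bochner_Integration.integrable_bound)
  show "integrable lborel (\<lambda>t. c * \<psi> t)"
    using \<open>integrable lborel \<psi>\<close> by simp
  have "\<bar>\<psi> t * F (exp (- t))\<bar> \<le> \<bar>c * \<psi> t\<bar>" for t
  proof (cases "t \<le> 0")
    case False
    then have "\<bar>F (exp (- t))\<bar> \<le> \<bar>c\<bar>" using bound[of "exp (- t)"] by auto
    then show ?thesis by (metis abs_ge_zero abs_mult mult.commute mult_left_mono)
  qed (simp add: supp)
  then show "AE t in lborel. norm (\<psi> t * F (exp (- t))) \<le> norm (c * \<psi> t)"
    by simp
qed measurable

lemma integral_mult_comp_exp_eq_0:
  fixes \<psi> F :: "real \<Rightarrow> real"
  assumes [measurable]: "\<psi> \<in> borel_measurable borel"
    and int: "integrable lborel \<psi>" and supp: "\<And>t. t \<le> 0 \<Longrightarrow> \<psi> t = 0"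
    and moments: "\<And>n::nat. (\<integral>t. \<psi> t * exp (- t) ^ n \<partial>lborel) = 0"
    and cont: "continuous_on UNIV F"
  shows "(\<integral>t. \<psi> t * F (exp (- t)) \<partial>lborel) = 0"
proof (rule ccontr)
  have [measurable]: "F \<in> borel_measurable borel"
    using cont by (rule borel_measurable_continuous_onI)
  have int_pow: "integrable lborel (\<lambda>t. \<psi> t * exp (- t) ^ n)" for n
    by (rule integrable_mult_comp_exp[OF _ _ int supp, of "\<lambda>u. u ^ n" 1]) (auto simp: power_le_one)
  obtain c where c: "\<And>u. u \<in> {0..1} \<Longrightarrow> \<bar>F u\<bar> \<le> c"
    using compact_imp_bounded[OF compact_continuous_image[OF continuous_on_subset[OF cont]]]
    by (metis bounded_iff compact_Icc image_eqI real_norm_def subset_UNIV)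
  have int_F: "integrable lborel (\<lambda>t. \<psi> t * F (exp (- t)))"
    by (rule integrable_mult_comp_exp[OF _ _ int supp c]) auto
  define I where "I = (\<integral>t. \<psi> t * F (exp (- t)) \<partial>lborel)"
  define J where "J = (\<integral>t. \<bar>\<psi> t\<bar> \<partial>lborel)"
  have "J \<ge> 0"
    by (simp add: J_def)
  assume "(\<integral>t. \<psi> t * F (exp (- t)) \<partial>lborel) \<noteq> 0"
  with \<open>J \<ge> 0\<close> have e: "\<bar>I\<bar> / (J + 1) > 0"
    by (simp add: I_def)
  then obtain P where "real_polynomial_function P"
    and P: "\<And>u. u \<in> {0..1} \<Longrightarrow> \<bar>F u - P u\<bar> < \<bar>I\<bar> / (J + 1)"
    using Stone_Weierstrass_real_polynomial_function[OF compact_Icc continuous_on_subset[OF cont] e]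
    by auto
  then obtain a N where P_eq: "P = (\<lambda>x. \<Sum>i\<le>N. a i * x ^ i)"
    using real_polynomial_function_iff_sum by auto
  \<comment> \<open>the moments kill the polynomial part, so only the approximation error is left\<close>
  have P_sum: "(\<lambda>t. \<psi> t * P (exp (- t))) = (\<lambda>t. \<Sum>i\<le>N. a i * (\<psi> t * exp (- t) ^ i))"
    by (simp add: P_eq sum_distrib_left mult_ac)
  have int_P: "integrable lborel (\<lambda>t. \<psi> t * P (exp (- t)))"
    and P_zero: "(\<integral>t. \<psi> t * P (exp (- t)) \<partial>lborel) = 0"
    unfolding P_sum using int_pow moments by (simp_all add: integral_sum)
  have "I = (\<integral>t. \<psi> t * (F (exp (- t)) - P (exp (- t))) \<partial>lborel)"
    using int_F int_P P_zero by (simp add: I_def right_diff_distrib)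
  also have "\<bar>\<dots>\<bar> \<le> (\<integral>t. \<bar>I\<bar> / (J + 1) * \<bar>\<psi> t\<bar> \<partial>lborel)"
  proof (rule integral_abs_bound_integral)
    show "integrable lborel (\<lambda>t. \<psi> t * (F (exp (- t)) - P (exp (- t))))"
      using int_F int_P by (simp add: right_diff_distrib)
    show "\<bar>\<psi> t * (F (exp (- t)) - P (exp (- t)))\<bar> \<le> \<bar>I\<bar> / (J + 1) * \<bar>\<psi> t\<bar>" for t
    proof (cases "t \<le> 0")
      case False
      then have "\<bar>F (exp (- t)) - P (exp (- t))\<bar> \<le> \<bar>I\<bar> / (J + 1)"
        using P[of "exp (- t)"] by simp
      then show ?thesis by (metis abs_ge_zero abs_mult mult.commute mult_left_mono)
    qed (simp add: supp)
  qed (use int in simp)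
  also have "\<dots> = \<bar>I\<bar> * (J / (J + 1))"
    by (simp add: J_def)
  also have "\<dots> < \<bar>I\<bar>"
    using e \<open>J \<ge> 0\<close> by (simp add: field_simps)
  finally show False by simp
qed

lemma integral_tail_eq_0_if_exp_moments_eq_0:
  fixes \<psi> :: "real \<Rightarrow> real"
  assumes [measurable]: "\<psi> \<in> borel_measurable borel"
    and int: "integrable lborel \<psi>" and supp: "\<And>t. t \<le> 0 \<Longrightarrow> \<psi> t = 0"
    and moments: "\<And>n::nat. (\<integral>t. \<psi> t * exp (- t) ^ n \<partial>lborel) = 0"
  shows "(\<integral>t. \<psi> t * indicator {x<..} t \<partial>lborel) = 0"
proof -
  \<comment> \<open>continuous ramps \<open>F k\<close> with \<open>F k (exp (- t))\<close> increasing to the indicator of \<open>t > x\<close>\<close>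
  define F where "F k u = max 0 (min 1 (real (Suc k) * (exp (- x) - u)))" for k :: nat and u :: real
  have cont: "continuous_on UNIV (F k)" for k
    unfolding F_def by (intro continuous_intros)
  have F_lim: "(\<lambda>k. F k (exp (- t))) \<longlonglongrightarrow> indicator {x<..} t" for t
  proof (cases "x < t")
    case True
    then have d: "exp (- x) - exp (- t) > 0" by simp
    obtain k0 :: nat where "1 / (exp (- x) - exp (- t)) < k0"
      using reals_Archimedean2 by blast
    then have k0: "1 < real k0 * (exp (- x) - exp (- t))"
      using d by (simp add: field_simps)
    have "F k (exp (- t)) = 1" if "k \<ge> k0" for k
    proof -
      have "real k0 * (exp (- x) - exp (- t)) \<le> real (Suc k) * (exp (- x) - exp (- t))"
        using that d by (intro mult_right_mono) auto
      then show ?thesis using k0 by (simp add: F_def)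
    qed
    then show ?thesis
      using True by (auto intro: tendsto_eventually eventually_sequentiallyI)
  next
    case False
    then have "F k (exp (- t)) = 0" for k
      unfolding F_def by (intro max_absorb1 min.coboundedI2 mult_nonneg_nonpos) auto
    then show ?thesis using False by simp
  qed
  have "(\<lambda>k. \<integral>t. \<psi> t * F k (exp (- t)) \<partial>lborel) \<longlonglongrightarrow> (\<integral>t. \<psi> t * indicator {x<..} t \<partial>lborel)"
  proof (rule integral_dominated_convergence[where w="\<lambda>t. \<bar>\<psi> t\<bar>"])
    show "(\<lambda>t. \<psi> t * F k (exp (- t))) \<in> borel_measurable lborel" for k
      using borel_measurable_continuous_onI[OF cont[of k]] by measurable
    show "AE t in lborel. norm (\<psi> t * F k (exp (- t))) \<le> \<bar>\<psi> t\<bar>" for k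
      by (intro AE_I2) (simp add: F_def abs_mult mult_left_le)
    show "AE t in lborel. (\<lambda>k. \<psi> t * F k (exp (- t))) \<longlonglongrightarrow> \<psi> t * indicator {x<..} t"
      by (intro AE_I2 tendsto_mult tendsto_const F_lim)
  qed (use int in auto)
  moreover have "(\<integral>t. \<psi> t * F k (exp (- t)) \<partial>lborel) = 0" for k
    by (rule integral_mult_comp_exp_eq_0[OF _ int supp moments cont]) simp
  ultimately show ?thesis
    by (simp add: LIMSEQ_const_iff)
qed

lemma AE_eq_0_if_integral_tail_eq_0:
  fixes \<psi> :: "real \<Rightarrow> real"
  assumes [measurable]: "\<psi> \<in> borel_measurable borel" and int: "integrable lborel \<psi>"
    and tails: "\<And>x. (\<integral>t. \<psi> t * indicator {x<..} t \<partial>lborel) = 0"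
  shows "AE t in lborel. \<psi> t = 0"
proof -
  \<comment> \<open>the positive and negative parts of \<open>\<psi>\<close> define finite measures agreeing on all tails\<close>
  define pos where "pos t = max 0 (\<psi> t)" for t
  define neg where "neg t = max 0 (- \<psi> t)" for t
  have int_pos: "integrable lborel pos" and int_neg: "integrable lborel neg"
    unfolding pos_def neg_def using int by auto
  have pos_nonneg: "pos t \<ge> 0" and neg_nonneg: "neg t \<ge> 0" for t
    by (auto simp: pos_def neg_def)
  have tail_density: "emeasure (density lborel (\<lambda>t. ennreal (f t))) {x<..} =
      ennreal (\<integral>t. f t * indicator {x<..} t \<partial>lborel)"
    if "integrable lborel f" "\<And>t. f t \<ge> 0" for f and x :: real
  proof -
    have "emeasure (density lborel (\<lambda>t. ennreal (f t))) {x<..} =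
        (\<integral>\<^sup>+t. ennreal (f t * indicator {x<..} t) \<partial>lborel)"
      using that by (subst emeasure_density) (auto intro!: nn_integral_cong simp: indicator_def)
    also have "\<dots> = ennreal (\<integral>t. f t * indicator {x<..} t \<partial>lborel)"
      using that by (intro nn_integral_eq_integral integrable_real_mult_indicator) auto
    finally show ?thesis .
  qed
  have "density lborel (\<lambda>t. ennreal (pos t)) = density lborel (\<lambda>t. ennreal (neg t))"
  proof (rule measure_eqI_lessThan)
    fix x :: real
    have "(\<integral>t. \<psi> t * indicator {x<..} t \<partial>lborel) =
        (\<integral>t. pos t * indicator {x<..} t - neg t * indicator {x<..} t \<partial>lborel)"
      by (intro Bochner_Integration.integral_cong) (auto simp: pos_def neg_def indicator_def)
    also have "\<dots> = (\<integral>t. pos t * indicator {x<..} t \<partial>lborel) - (\<integral>t. neg t * indicator {x<..} t \<partial>lborel)"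
      using int_pos int_neg by (intro Bochner_Integration.integral_diff integrable_real_mult_indicator) auto
    finally have "(\<integral>t. pos t * indicator {x<..} t \<partial>lborel) = (\<integral>t. neg t * indicator {x<..} t \<partial>lborel)"
      using tails[of x] by simp
    then show "emeasure (density lborel (\<lambda>t. ennreal (pos t))) {x<..} =
        emeasure (density lborel (\<lambda>t. ennreal (neg t))) {x<..}"
      by (simp add: tail_density[OF int_pos pos_nonneg] tail_density[OF int_neg neg_nonneg])
    show "emeasure (density lborel (\<lambda>t. ennreal (pos t))) {x<..} < \<infinity>"
      by (simp add: tail_density[OF int_pos pos_nonneg])
  qed (auto simp: pos_def neg_def)
  then have "AE t in lborel. ennreal (pos t) = ennreal (neg t)"
    by (intro sigma_finite_measure.density_unique[OF sigma_finite_lborel]) (auto simp: pos_def neg_def)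
  then show ?thesis
    by eventually_elim (auto simp: pos_def neg_def max_def split: if_splits)
qed

theorem laplace_eq_0_imp_AE_eq_0:
  fixes f :: "real \<Rightarrow> real"
  assumes [measurable]: "f \<in> borel_measurable borel" and int: "laplace_integrable f"
    and zero: "AE s in lborel. s > 0 \<longrightarrow> laplace f s = 0"
  shows "AE t in lborel. t > 0 \<longrightarrow> f t = 0"
proof -
  have laplace_zero: "laplace f s = 0" if "s > 0" for s
  proof (rule ccontr)
    assume "laplace f s \<noteq> 0"
    then obtain e where e: "e > 0" "\<And>r. dist s r < e \<Longrightarrow> laplace f r \<noteq> 0"
      using continuous_at_avoid[OF isCont_laplace[OF _ int \<open>s > 0\<close>]] by auto
    obtain r where r: "r \<in> {max 0 (s - e)<..<s + e}" "r > 0 \<longrightarrow> laplace f r = 0"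
      using AE_imp_ex_in_interval[OF zero, of "max 0 (s - e)" "s + e"] e \<open>s > 0\<close> by auto
    then have "dist s r < e"
      by (auto simp: dist_real_def)
    with r show False
      using e(2) by auto
  qed
  \<comment> \<open>the moments of \<open>\<psi>\<close> are the values of the Laplace transform at the integers \<open>n + 1\<close>\<close>
  define \<psi> where "\<psi> t = indicator {0<..} t * (exp (- 1 * t) * f t)" for t
  have [measurable]: "\<psi> \<in> borel_measurable borel"
    unfolding \<psi>_def by measurable
  have int_\<psi>: "integrable lborel \<psi>"
    using laplace_integrableD[OF int, of 1] unfolding \<psi>_def set_integrable_def by simp
  have supp: "\<psi> t = 0" if "t \<le> 0" for t
    using that by (simp add: \<psi>_def)
  have "(\<integral>t. \<psi> t * exp (- t) ^ n \<partial>lborel) = laplace f (real n + 1)" for n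
    unfolding laplace_def set_lebesgue_integral_def \<psi>_def
    by (intro Bochner_Integration.integral_cong refl)
       (auto simp: exp_of_nat_mult[symmetric] algebra_simps simp flip: exp_add)
  then have "(\<integral>t. \<psi> t * exp (- t) ^ n \<partial>lborel) = 0" for n
    by (simp add: laplace_zero add_nonneg_pos)
  then have "AE t in lborel. \<psi> t = 0"
    using integral_tail_eq_0_if_exp_moments_eq_0[OF _ int_\<psi> supp]
    by (intro AE_eq_0_if_integral_tail_eq_0[OF _ int_\<psi>]) auto
  then show ?thesis
    by eventually_elim (auto simp: \<psi>_def)
qed

section \<open>Cumulative integrals\<close>

lemma set_integrable_Ioc_if_laplace:
  fixes G :: "real \<Rightarrow> real"
  assumes [measurable]: "G \<in> borel_measurable borel"
    and int: "set_integrable lborel {0<..} (\<lambda>t. exp (- s * t) * G t)" and "s \<ge> 0"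
  shows "set_integrable lborel {0<..x} G"
proof (rule set_integrable_bound)
  show "set_integrable lborel {0<..x} (\<lambda>t. exp (s * x) * (exp (- s * t) * G t))"
    using set_integrable_subset[OF int, of "{0<..x}"] by (intro set_integrable_mult_right) force
  have "\<bar>G t\<bar> \<le> exp (s * x) * \<bar>exp (- s * t) * G t\<bar>" if "t \<le> x" for t
  proof -
    have "1 \<le> exp (s * x) * exp (- s * t)"
      using that \<open>s \<ge> 0\<close> by (simp add: mult_left_mono flip: exp_add)
    from mult_right_mono[OF this abs_ge_zero[of "G t"]] show ?thesis
      by (simp add: abs_mult mult_ac)
  qed
  then show "AE t in lborel. t \<in> {0<..x} \<longrightarrow> norm (G t) \<le> norm (exp (s * x) * (exp (- s * t) * G t))"
    by (auto simp: abs_mult)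
qed (simp add: set_borel_measurable_def)

lemma measurable_cumulative [measurable]:
  fixes G :: "real \<Rightarrow> real"
  assumes [measurable]: "G \<in> borel_measurable borel"
  shows "(\<lambda>t. LINT \<xi>:{0<..t}|lborel. G \<xi>) \<in> borel_measurable borel"
proof -
  have "(\<lambda>t. LINT \<xi>:{0<..t}|lborel. G \<xi>) = (\<lambda>t. \<integral>\<xi>. (if 0 < \<xi> \<and> \<xi> \<le> t then G \<xi> else 0) \<partial>lborel)"
    unfolding set_lebesgue_integral_def
    by (intro ext Bochner_Integration.integral_cong) (auto simp: indicator_def)
  then show ?thesis
    by simp
qed

lemma nn_integral_mult_cumulative:
  fixes G K :: "real \<Rightarrow> ennreal"
  assumes [measurable]: "G \<in> borel_measurable borel" "K \<in> borel_measurable borel"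
  shows "(\<integral>\<^sup>+t. K t * (\<integral>\<^sup>+\<xi>. G \<xi> * indicator {0<..t} \<xi> \<partial>lborel) \<partial>lborel) =
         (\<integral>\<^sup>+\<xi>. G \<xi> * indicator {0<..} \<xi> * (\<integral>\<^sup>+t. K t * indicator {\<xi>..} t \<partial>lborel) \<partial>lborel)"
proof -
  have "(\<integral>\<^sup>+t. K t * (\<integral>\<^sup>+\<xi>. G \<xi> * indicator {0<..t} \<xi> \<partial>lborel) \<partial>lborel) =
        (\<integral>\<^sup>+t. \<integral>\<^sup>+\<xi>. K t * G \<xi> * of_bool (0 < \<xi> \<and> \<xi> \<le> t) \<partial>lborel \<partial>lborel)"
    by (intro nn_integral_cong, subst nn_integral_cmult[symmetric])
       (auto intro!: nn_integral_cong simp: indicator_def mult.assoc)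
  also have "\<dots> = (\<integral>\<^sup>+\<xi>. \<integral>\<^sup>+t. K t * G \<xi> * of_bool (0 < \<xi> \<and> \<xi> \<le> t) \<partial>lborel \<partial>lborel)"
    by (subst lborel_pair.Fubini') (auto simp: case_prod_unfold)
  also have "\<dots> = (\<integral>\<^sup>+\<xi>. G \<xi> * indicator {0<..} \<xi> * (\<integral>\<^sup>+t. K t * indicator {\<xi>..} t \<partial>lborel) \<partial>lborel)"
    by (intro nn_integral_cong, subst nn_integral_cmult[symmetric])
       (auto intro!: nn_integral_cong simp: indicator_def mult_ac)
  finally show ?thesis .
qed

lemma nn_integral_exp_tail:
  assumes "s > 0"
  shows "(\<integral>\<^sup>+t. ennreal (exp (- s * t)) * indicator {\<xi>..} t \<partial>lborel) = ennreal (exp (- s * \<xi>) / s)"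
proof -
  have "(\<integral>\<^sup>+t. ennreal (exp (- s * t)) * indicator {\<xi>..} t \<partial>lborel) =
      (\<integral>\<^sup>+t. ennreal (indicator {\<xi>..} t * exp (- s * t)) \<partial>lborel)"
    by (intro nn_integral_cong) (simp add: indicator_def)
  also have "\<dots> = ennreal (exp (- s * \<xi>) / s)"
    using assms by (intro nn_integral_has_integral_lebesgue has_integral_exp_minus_to_infinity) auto
  finally show ?thesis .
qed

lemma nn_integral_powr_derivative:
  assumes "0 < \<xi>" "\<xi> \<le> x" "a \<ge> 0"
  shows "(\<integral>\<^sup>+t. ennreal (a * t powr (a - 1)) * indicator {\<xi>..x} t \<partial>lborel) = ennreal (x powr a - \<xi> powr a)"
proof -
  have "(\<integral>\<^sup>+t. ennreal (a * t powr (a - 1)) * indicator {\<xi>..x} t \<partial>lborel) =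
      (\<integral>\<^sup>+t. ennreal (indicator {\<xi>..x} t * (a * t powr (a - 1))) \<partial>lborel)"
    by (intro nn_integral_cong) (simp add: indicator_def)
  also have "\<dots> = ennreal (x powr a - \<xi> powr a)"
  proof (intro nn_integral_has_integral_lebesgue fundamental_theorem_of_calculus)
    fix t assume "t \<in> {\<xi>..x}"
    then have "t > 0" using assms by auto
    then show "((\<lambda>t. t powr a) has_vector_derivative a * t powr (a - 1)) (at t within {\<xi>..x})"
      by (auto intro!: derivative_eq_intros simp flip: has_real_derivative_iff_has_vector_derivative)
  qed (use assms in auto)
  finally show ?thesis .
qed

lemma laplace_cumulative_nonneg:
  fixes G :: "real \<Rightarrow> real"
  assumes [measurable]: "G \<in> borel_measurable borel" and G_nonneg: "\<And>t. G t \<ge> 0" and "s > 0"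
    and int: "set_integrable lborel {0<..} (\<lambda>t. exp (- s * t) * G t)"
  shows "set_integrable lborel {0<..} (\<lambda>t. exp (- s * t) * (LINT \<xi>:{0<..t}|lborel. G \<xi>))"
    and "laplace (\<lambda>t. LINT \<xi>:{0<..t}|lborel. G \<xi>) s = laplace G s / s"
proof -
  have cumulative: "ennreal (LINT \<xi>:{0<..t}|lborel. G \<xi>) = (\<integral>\<^sup>+\<xi>. ennreal (G \<xi>) * indicator {0<..t} \<xi> \<partial>lborel)" for t
    using set_integrable_Ioc_if_laplace[OF _ int] \<open>s > 0\<close> G_nonneg
    by (intro nn_integral_eq_set_integral[symmetric]) auto
  have "(\<integral>\<^sup>+t. ennreal (exp (- s * t) * (LINT \<xi>:{0<..t}|lborel. G \<xi>)) * indicator {0<..} t \<partial>lborel) =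
      (\<integral>\<^sup>+t. (ennreal (exp (- s * t)) * indicator {0<..} t) * (\<integral>\<^sup>+\<xi>. ennreal (G \<xi>) * indicator {0<..t} \<xi> \<partial>lborel) \<partial>lborel)"
    using G_nonneg by (intro nn_integral_cong) (simp add: ennreal_mult set_integral_nonneg mult_ac flip: cumulative)
  also have "\<dots> = (\<integral>\<^sup>+\<xi>. ennreal (G \<xi>) * indicator {0<..} \<xi> *
      (\<integral>\<^sup>+t. (ennreal (exp (- s * t)) * indicator {0<..} t) * indicator {\<xi>..} t \<partial>lborel) \<partial>lborel)"
    by (rule nn_integral_mult_cumulative) auto
  also have "\<dots> = (\<integral>\<^sup>+\<xi>. ennreal (exp (- s * \<xi>) * G \<xi> / s) * indicator {0<..} \<xi> \<partial>lborel)"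
  proof (intro nn_integral_cong)
    fix \<xi> :: real
    show "ennreal (G \<xi>) * indicator {0<..} \<xi> *
        (\<integral>\<^sup>+t. (ennreal (exp (- s * t)) * indicator {0<..} t) * indicator {\<xi>..} t \<partial>lborel) =
        ennreal (exp (- s * \<xi>) * G \<xi> / s) * indicator {0<..} \<xi>"
    proof (cases "\<xi> > 0")
      case True
      then have "(\<integral>\<^sup>+t. (ennreal (exp (- s * t)) * indicator {0<..} t) * indicator {\<xi>..} t \<partial>lborel) =
          ennreal (exp (- s * \<xi>) / s)"
        using \<open>s > 0\<close> by (subst nn_integral_exp_tail[symmetric]) (auto intro!: nn_integral_cong simp: indicator_def)
      then show ?thesis
        using True G_nonneg[of \<xi>] by (simp add: ennreal_mult'[symmetric] mult_ac)
    qed simp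
  qed
  also have "\<dots> = ennreal (laplace G s / s)"
    using int G_nonneg \<open>s > 0\<close> unfolding laplace_def
    by (subst nn_integral_eq_set_integral) auto
  finally have nn: "(\<integral>\<^sup>+t. ennreal (exp (- s * t) * (LINT \<xi>:{0<..t}|lborel. G \<xi>)) * indicator {0<..} t \<partial>lborel) =
      ennreal (laplace G s / s)" .
  have "0 \<le> laplace G s / s"
    using G_nonneg \<open>s > 0\<close> by (simp add: laplace_def set_integral_nonneg)
  then show "set_integrable lborel {0<..} (\<lambda>t. exp (- s * t) * (LINT \<xi>:{0<..t}|lborel. G \<xi>))"
    and "laplace (\<lambda>t. LINT \<xi>:{0<..t}|lborel. G \<xi>) s = laplace G s / s"
    using set_integral_if_nn_integral_eq[OF _ _ _ nn] G_nonneg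
    by (auto simp: laplace_def set_integral_nonneg set_borel_measurable_def)
qed

lemma laplace_cumulative:
  fixes G :: "real \<Rightarrow> real"
  assumes [measurable]: "G \<in> borel_measurable borel" and "s > 0"
    and int: "set_integrable lborel {0<..} (\<lambda>t. exp (- s * t) * G t)"
  shows "set_integrable lborel {0<..} (\<lambda>t. exp (- s * t) * (LINT \<xi>:{0<..t}|lborel. G \<xi>))"
    and "laplace (\<lambda>t. LINT \<xi>:{0<..t}|lborel. G \<xi>) s = laplace G s / s"
proof -
  define pos where "pos t = max 0 (G t)" for t
  define neg where "neg t = max 0 (- G t)" for t
  have [measurable]: "pos \<in> borel_measurable borel" "neg \<in> borel_measurable borel"
    unfolding pos_def neg_def by measurable
  have exp_parts: "exp (- s * t) * pos t = max 0 (exp (- s * t) * G t)"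
    "exp (- s * t) * neg t = max 0 (- (exp (- s * t) * G t))" for t
    by (simp_all add: pos_def neg_def max_mult_distrib_left)
  note parts = set_integral_pos_neg_parts[OF int, folded exp_parts]
  have cumulative: "(LINT \<xi>:{0<..t}|lborel. G \<xi>) =
      (LINT \<xi>:{0<..t}|lborel. pos \<xi>) - (LINT \<xi>:{0<..t}|lborel. neg \<xi>)" for t
    unfolding pos_def neg_def
    by (rule set_integral_pos_neg_parts(3)[OF set_integrable_Ioc_if_laplace[OF _ int]]) (use \<open>s > 0\<close> in auto)
  note pos = laplace_cumulative_nonneg[OF _ _ \<open>s > 0\<close> parts(1)]
  note neg = laplace_cumulative_nonneg[OF _ _ \<open>s > 0\<close> parts(2)]
  show "set_integrable lborel {0<..} (\<lambda>t. exp (- s * t) * (LINT \<xi>:{0<..t}|lborel. G \<xi>))"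
    using set_integral_diff(1)[OF pos(1) neg(1)] by (simp add: cumulative right_diff_distrib pos_def neg_def)
  have "laplace G s = laplace pos s - laplace neg s"
    using parts by (simp add: laplace_def)
  then show "laplace (\<lambda>t. LINT \<xi>:{0<..t}|lborel. G \<xi>) s = laplace G s / s"
    using pos neg by (simp add: laplace_def cumulative right_diff_distrib diff_divide_distrib pos_def neg_def)
qed

lemma set_integrable_powr_mult:
  fixes G :: "real \<Rightarrow> real"
  assumes [measurable]: "G \<in> borel_measurable borel"
    and int: "set_integrable lborel {0<..x} G" and "a \<ge> 0"
  shows "set_integrable lborel {0<..x} (\<lambda>\<xi>. \<xi> powr a * G \<xi>)"
proof (rule set_integrable_bound)
  show "set_integrable lborel {0<..x} (\<lambda>\<xi>. x powr a * G \<xi>)"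
    using int by simp
  have "\<bar>\<xi> powr a * G \<xi>\<bar> \<le> \<bar>x powr a * G \<xi>\<bar>" if "\<xi> \<in> {0<..x}" for \<xi>
    using that \<open>a \<ge> 0\<close> by (auto simp: abs_mult intro!: mult_right_mono powr_mono2)
  then show "AE \<xi> in lborel. \<xi> \<in> {0<..x} \<longrightarrow> norm (\<xi> powr a * G \<xi>) \<le> norm (x powr a * G \<xi>)"
    by simp
qed (simp add: set_borel_measurable_def)

lemma powr_cumulative_nonneg:
  fixes G :: "real \<Rightarrow> real"
  assumes [measurable]: "G \<in> borel_measurable borel" and G_nonneg: "\<And>t. G t \<ge> 0"
    and int: "set_integrable lborel {0<..x} G" and "a \<ge> 0"
  shows "set_integrable lborel {0<..x} (\<lambda>t. a * t powr (a - 1) * (LINT \<xi>:{0<..t}|lborel. G \<xi>))"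
    and "(LINT \<xi>:{0<..x}|lborel. \<xi> powr a * G \<xi>) +
         (LINT t:{0<..x}|lborel. a * t powr (a - 1) * (LINT \<xi>:{0<..t}|lborel. G \<xi>)) =
         x powr a * (LINT \<xi>:{0<..x}|lborel. G \<xi>)"
proof -
  have int_powr: "set_integrable lborel {0<..x} (\<lambda>\<xi>. \<xi> powr a * G \<xi>)"
    by (rule set_integrable_powr_mult[OF _ int \<open>a \<ge> 0\<close>]) simp
  have cumulative: "ennreal (LINT \<xi>:{0<..t}|lborel. G \<xi>) = (\<integral>\<^sup>+\<xi>. ennreal (G \<xi>) * indicator {0<..t} \<xi> \<partial>lborel)"
    if "t \<le> x" for t
  proof (rule nn_integral_eq_set_integral[symmetric])
    show "set_integrable lborel {0<..t} G"
      by (rule set_integrable_subset[OF int]) (use that in auto)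
  qed (rule G_nonneg)
  have "(\<integral>\<^sup>+t. ennreal (a * t powr (a - 1) * (LINT \<xi>:{0<..t}|lborel. G \<xi>)) * indicator {0<..x} t \<partial>lborel) =
      (\<integral>\<^sup>+t. (ennreal (a * t powr (a - 1)) * indicator {0<..x} t) *
        (\<integral>\<^sup>+\<xi>. ennreal (G \<xi>) * indicator {0<..t} \<xi> \<partial>lborel) \<partial>lborel)"
    using G_nonneg \<open>a \<ge> 0\<close>
    by (intro nn_integral_cong) (auto simp: ennreal_mult set_integral_nonneg cumulative indicator_def)
  also have "\<dots> = (\<integral>\<^sup>+\<xi>. ennreal (G \<xi>) * indicator {0<..} \<xi> *
      (\<integral>\<^sup>+t. (ennreal (a * t powr (a - 1)) * indicator {0<..x} t) * indicator {\<xi>..} t \<partial>lborel) \<partial>lborel)"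
    by (rule nn_integral_mult_cumulative) auto
  also have "\<dots> = (\<integral>\<^sup>+\<xi>. ennreal (x powr a * G \<xi> - \<xi> powr a * G \<xi>) * indicator {0<..x} \<xi> \<partial>lborel)"
  proof (intro nn_integral_cong)
    fix \<xi> :: real
    show "ennreal (G \<xi>) * indicator {0<..} \<xi> *
        (\<integral>\<^sup>+t. (ennreal (a * t powr (a - 1)) * indicator {0<..x} t) * indicator {\<xi>..} t \<partial>lborel) =
        ennreal (x powr a * G \<xi> - \<xi> powr a * G \<xi>) * indicator {0<..x} \<xi>"
    proof (cases "0 < \<xi> \<and> \<xi> \<le> x")
      case True
      then have "(\<integral>\<^sup>+t. (ennreal (a * t powr (a - 1)) * indicator {0<..x} t) * indicator {\<xi>..} t \<partial>lborel) =
          ennreal (x powr a - \<xi> powr a)"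
        using \<open>a \<ge> 0\<close>
        by (subst nn_integral_powr_derivative[symmetric]) (auto intro!: nn_integral_cong simp: indicator_def)
      moreover have "\<xi> powr a \<le> x powr a"
        using True \<open>a \<ge> 0\<close> by (intro powr_mono2) auto
      ultimately show ?thesis
        using True G_nonneg[of \<xi>] by (simp add: ennreal_mult'[symmetric] algebra_simps)
    next
      case False
      then have "\<xi> \<le> 0 \<or> (\<integral>\<^sup>+t. (ennreal (a * t powr (a - 1)) * indicator {0<..x} t) * indicator {\<xi>..} t \<partial>lborel) = 0"
        by (subst nn_integral_0_iff_AE) (auto simp: indicator_def)
      then show ?thesis
        using False by (auto simp: indicator_def)
    qed
  qed
  also have "\<dots> = ennreal (x powr a * (LINT \<xi>:{0<..x}|lborel. G \<xi>) - (LINT \<xi>:{0<..x}|lborel. \<xi> powr a * G \<xi>))"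
    using int int_powr G_nonneg \<open>a \<ge> 0\<close>
    by (subst nn_integral_eq_set_integral) (auto intro!: mult_right_mono powr_mono2)
  finally have nn: "(\<integral>\<^sup>+t. ennreal (a * t powr (a - 1) * (LINT \<xi>:{0<..t}|lborel. G \<xi>)) * indicator {0<..x} t \<partial>lborel) =
      ennreal (x powr a * (LINT \<xi>:{0<..x}|lborel. G \<xi>) - (LINT \<xi>:{0<..x}|lborel. \<xi> powr a * G \<xi>))" .
  have "(LINT \<xi>:{0<..x}|lborel. \<xi> powr a * G \<xi>) \<le> (LINT \<xi>:{0<..x}|lborel. x powr a * G \<xi>)"
    using int int_powr G_nonneg \<open>a \<ge> 0\<close> by (intro set_integral_mono) (auto intro!: mult_right_mono powr_mono2)
  then show "set_integrable lborel {0<..x} (\<lambda>t. a * t powr (a - 1) * (LINT \<xi>:{0<..t}|lborel. G \<xi>))"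
    and "(LINT \<xi>:{0<..x}|lborel. \<xi> powr a * G \<xi>) +
         (LINT t:{0<..x}|lborel. a * t powr (a - 1) * (LINT \<xi>:{0<..t}|lborel. G \<xi>)) =
         x powr a * (LINT \<xi>:{0<..x}|lborel. G \<xi>)"
    using set_integral_if_nn_integral_eq[OF _ _ _ nn] G_nonneg \<open>a \<ge> 0\<close>
    by (auto simp: set_integral_nonneg set_borel_measurable_def)
qed

lemma powr_cumulative:
  fixes G :: "real \<Rightarrow> real"
  assumes [measurable]: "G \<in> borel_measurable borel"
    and int: "set_integrable lborel {0<..x} G" and "a \<ge> 0"
  shows "set_integrable lborel {0<..x} (\<lambda>t. a * t powr (a - 1) * (LINT \<xi>:{0<..t}|lborel. G \<xi>))"
    and "(LINT \<xi>:{0<..x}|lborel. \<xi> powr a * G \<xi>) +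
         (LINT t:{0<..x}|lborel. a * t powr (a - 1) * (LINT \<xi>:{0<..t}|lborel. G \<xi>)) =
         x powr a * (LINT \<xi>:{0<..x}|lborel. G \<xi>)"
proof -
  define pos where "pos t = max 0 (G t)" for t
  define neg where "neg t = max 0 (- G t)" for t
  have meas_pos [measurable]: "pos \<in> borel_measurable borel"
    and meas_neg [measurable]: "neg \<in> borel_measurable borel"
    unfolding pos_def neg_def by measurable
  have pos_nonneg: "pos t \<ge> 0" and neg_nonneg: "neg t \<ge> 0" for t
    by (simp_all add: pos_def neg_def)
  note parts = set_integral_pos_neg_parts[OF int, folded pos_def neg_def]
  have cumulative: "(LINT \<xi>:{0<..t}|lborel. G \<xi>) =
      (LINT \<xi>:{0<..t}|lborel. pos \<xi>) - (LINT \<xi>:{0<..t}|lborel. neg \<xi>)" if "t \<in> {0<..x}" for t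
    unfolding pos_def neg_def
    by (rule set_integral_pos_neg_parts(3)[OF set_integrable_subset[OF int]]) (use that in auto)
  have powr_parts: "\<xi> powr a * pos \<xi> = max 0 (\<xi> powr a * G \<xi>)"
    "\<xi> powr a * neg \<xi> = max 0 (- (\<xi> powr a * G \<xi>))" for \<xi>
    by (simp_all add: pos_def neg_def max_mult_distrib_left)
  note powr_int = set_integral_pos_neg_parts[OF set_integrable_powr_mult[OF _ int \<open>a \<ge> 0\<close>], folded powr_parts]
  note pos = powr_cumulative_nonneg[OF meas_pos pos_nonneg parts(1) \<open>a \<ge> 0\<close>]
  note neg = powr_cumulative_nonneg[OF meas_neg neg_nonneg parts(2) \<open>a \<ge> 0\<close>]
  have kernel: "a * t powr (a - 1) * (LINT \<xi>:{0<..t}|lborel. G \<xi>) =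
      a * t powr (a - 1) * (LINT \<xi>:{0<..t}|lborel. pos \<xi>) - a * t powr (a - 1) * (LINT \<xi>:{0<..t}|lborel. neg \<xi>)"
    if "t \<in> {0<..x}" for t
    using cumulative[OF that] by (simp add: right_diff_distrib)
  note diff = set_integral_diff[OF pos(1) neg(1)]
  from diff(1) show "set_integrable lborel {0<..x} (\<lambda>t. a * t powr (a - 1) * (LINT \<xi>:{0<..t}|lborel. G \<xi>))"
    by (subst set_integrable_cong[OF refl refl kernel]) auto
  have kernel_integral: "(LINT t:{0<..x}|lborel. a * t powr (a - 1) * (LINT \<xi>:{0<..t}|lborel. G \<xi>)) =
      (LINT t:{0<..x}|lborel. a * t powr (a - 1) * (LINT \<xi>:{0<..t}|lborel. pos \<xi>)) -
      (LINT t:{0<..x}|lborel. a * t powr (a - 1) * (LINT \<xi>:{0<..t}|lborel. neg \<xi>))"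
    unfolding diff(2)[symmetric] using kernel by (intro set_lebesgue_integral_cong) auto
  show "(LINT \<xi>:{0<..x}|lborel. \<xi> powr a * G \<xi>) +
         (LINT t:{0<..x}|lborel. a * t powr (a - 1) * (LINT \<xi>:{0<..t}|lborel. G \<xi>)) =
         x powr a * (LINT \<xi>:{0<..x}|lborel. G \<xi>)"
    using pos(2) neg(2) powr_int(3) kernel_integral parts(3) by (simp add: right_diff_distrib)
qed

section \<open>The integral equation\<close>

lemma integral_equation_if_laplace_identity:
  fixes v w g :: "real \<Rightarrow> real"
  assumes [measurable]: "v \<in> borel_measurable borel" "w \<in> borel_measurable borel" "g \<in> borel_measurable borel"
    and v: "laplace_integrable v" and w: "laplace_integrable w" and g: "laplace_integrable g"
    and identity: "AE s in lborel. s > 0 \<longrightarrow> laplace v s + s * laplace w s = laplace g s"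
  shows "AE t in lborel. t > 0 \<longrightarrow> w t + (LINT \<xi>:{0<..t}|lborel. v \<xi>) = (LINT \<xi>:{0<..t}|lborel. g \<xi>)"
proof -
  define \<phi> where "\<phi> t = w t + (LINT \<xi>:{0<..t}|lborel. v \<xi>) - (LINT \<xi>:{0<..t}|lborel. g \<xi>)" for t
  have [measurable]: "\<phi> \<in> borel_measurable borel"
    unfolding \<phi>_def by measurable
  have laplace_\<phi>: "set_integrable lborel {0<..} (\<lambda>t. exp (- s * t) * \<phi> t) \<and>
      laplace \<phi> s = laplace w s + (laplace v s - laplace g s) / s" if "s > 0" for s
  proof -
    note V = laplace_cumulative[OF _ that laplace_integrableD[OF v that]]
    note G = laplace_cumulative[OF _ that laplace_integrableD[OF g that]]
    note W = laplace_integrableD[OF w that]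
    have "(\<lambda>t. exp (- s * t) * \<phi> t) = (\<lambda>t. exp (- s * t) * w t +
        exp (- s * t) * (LINT \<xi>:{0<..t}|lborel. v \<xi>) - exp (- s * t) * (LINT \<xi>:{0<..t}|lborel. g \<xi>))"
      by (simp add: \<phi>_def fun_eq_iff distrib_left right_diff_distrib)
    moreover have "laplace w s + laplace v s / s - laplace g s / s = laplace w s + (laplace v s - laplace g s) / s"
      by (simp add: diff_divide_distrib)
    ultimately show ?thesis
      using V G W by (simp add: laplace_def)
  qed
  have laplace_zero: "AE s in lborel. s > 0 \<longrightarrow> laplace \<phi> s = 0"
    using identity
  proof eventually_elim
    case (elim s)
    show ?case
    proof
      assume "s > 0"
      then have "(laplace v s - laplace g s) / s = - laplace w s"
        using elim by (simp add: divide_simps) argo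
      then show "laplace \<phi> s = 0"
        using laplace_\<phi>[OF \<open>s > 0\<close>] by simp
    qed
  qed
  have "laplace_integrable \<phi>"
    unfolding laplace_integrable_def using laplace_\<phi> by blast
  then have "AE t in lborel. t > 0 \<longrightarrow> \<phi> t = 0"
    using laplace_zero by (rule laplace_eq_0_imp_AE_eq_0[rotated]) measurable
  then show ?thesis
    by eventually_elim (simp add: \<phi>_def)
qed

lemma integral_equation_solution:
  fixes h g :: "real \<Rightarrow> real" and a :: real
  assumes [measurable]: "h \<in> borel_measurable borel" "g \<in> borel_measurable borel" and "a \<ge> 0"
    and int_h: "\<And>x. set_integrable lborel {0<..x} (\<lambda>\<xi>. a * \<xi> * h \<xi>)"
    and int_g: "\<And>x. set_integrable lborel {0<..x} g"
    and equation: "AE t in lborel. t > 0 \<longrightarrow>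
      t\<^sup>2 * h t + (LINT \<xi>:{0<..t}|lborel. a * \<xi> * h \<xi>) = (LINT \<xi>:{0<..t}|lborel. g \<xi>)"
  shows "AE x in lborel. x > 0 \<longrightarrow> x powr (a + 2) * h x = (LINT \<xi>:{0<..x}|lborel. \<xi> powr a * g \<xi>)"
  using equation
proof eventually_elim
  case (elim x)
  show ?case
  proof
    assume "x > 0"
    define H where "H t = (LINT \<xi>:{0<..t}|lborel. a * \<xi> * h \<xi>)" for t
    define G where "G t = (LINT \<xi>:{0<..t}|lborel. g \<xi>)" for t
    have [measurable]: "G \<in> borel_measurable borel" "H \<in> borel_measurable borel"
      unfolding G_def H_def by measurable
    note powr_G = powr_cumulative[OF _ int_g \<open>a \<ge> 0\<close>, of x, folded G_def]
    note powr_H = powr_cumulative[OF _ int_h \<open>a \<ge> 0\<close>, of x, folded H_def]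
    note int_powr_H = set_integrable_powr_mult[OF _ int_h \<open>a \<ge> 0\<close>, of x]
    \<comment> \<open>multiplying the equation by \<open>a t powr (a - 1)\<close> turns \<open>t\<^sup>2 h t\<close> into \<open>t powr a\<close> times the integrand of \<open>H\<close>\<close>
    have kernel: "AE t \<in> {0<..x} in lborel.
        a * t powr (a - 1) * G t = t powr a * (a * t * h t) + a * t powr (a - 1) * H t"
      using equation
    proof eventually_elim
      case (elim t)
      show ?case
      proof
        assume "t \<in> {0<..x}"
        then have "t powr (a - 1) * t\<^sup>2 = t powr a * t"
          by (simp add: powr_diff power2_eq_square)
        moreover have "G t = t\<^sup>2 * h t + H t"
          using elim \<open>t \<in> {0<..x}\<close> by (simp add: G_def H_def)
        ultimately show "a * t powr (a - 1) * G t = t powr a * (a * t * h t) + a * t powr (a - 1) * H t"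
          by (metis (no_types, opaque_lifting) distrib_left mult.assoc mult.left_commute)
      qed
    qed
    have "(LINT t:{0<..x}|lborel. a * t powr (a - 1) * G t) =
        (LINT t:{0<..x}|lborel. t powr a * (a * t * h t) + a * t powr (a - 1) * H t)"
      by (rule set_lebesgue_integral_cong_AE[OF _ _ _ kernel]) simp_all
    also have "\<dots> = x powr a * H x"
      using set_integral_add(2)[OF int_powr_H powr_H(1)] powr_H(2) by (simp add: mult.assoc)
    finally have "(LINT \<xi>:{0<..x}|lborel. \<xi> powr a * g \<xi>) = x powr a * (G x - H x)"
      using powr_G by (simp add: right_diff_distrib)
    also have "G x - H x = x\<^sup>2 * h x"
      using elim \<open>x > 0\<close> by (simp add: G_def H_def)
    moreover have "x powr (a + 2) = x powr a * x\<^sup>2"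
      using \<open>x > 0\<close> by (simp add: powr_add)
    ultimately show "x powr (a + 2) * h x = (LINT \<xi>:{0<..x}|lborel. \<xi> powr a * g \<xi>)"
      by (simp add: mult.assoc)
  qed
qed

lemma laplace_integrable_if_AE_finite:
  fixes f :: "real \<Rightarrow> real"
  assumes [measurable]: "f \<in> borel_measurable borel" and f_nonneg: "\<And>t. t > 0 \<Longrightarrow> f t \<ge> 0"
    and finite: "AE s in lborel. s > 0 \<longrightarrow>
      (\<integral>\<^sup>+t. ennreal (exp (- s * t) * f t) * indicator {0<..} t \<partial>lborel) < \<infinity>"
  shows "laplace_integrable f"
  unfolding laplace_integrable_def
proof (intro allI impI)
  fix s :: real
  assume "s > 0"
  \<comment> \<open>the Laplace integrand decreases in \<open>s\<close>, so finiteness at one smaller point suffices\<close>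
  obtain r where r: "0 < r" "r < s"
    "(\<integral>\<^sup>+t. ennreal (exp (- r * t) * f t) * indicator {0<..} t \<partial>lborel) < \<infinity>"
    using AE_imp_ex_in_interval[OF finite, of 0 s] \<open>s > 0\<close> by auto
  have "(\<integral>\<^sup>+t. ennreal (exp (- s * t) * f t) * indicator {0<..} t \<partial>lborel) \<le>
      (\<integral>\<^sup>+t. ennreal (exp (- r * t) * f t) * indicator {0<..} t \<partial>lborel)"
    using r f_nonneg
    by (intro nn_integral_mono) (auto simp: indicator_def intro!: ennreal_leI mult_right_mono)
  moreover have "(\<integral>\<^sup>+t. ennreal (norm (indicator {0<..} t *\<^sub>R (exp (- s * t) * f t))) \<partial>lborel) =
      (\<integral>\<^sup>+t. ennreal (exp (- s * t) * f t) * indicator {0<..} t \<partial>lborel)"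
    using f_nonneg by (intro nn_integral_cong) (auto simp: indicator_def)
  ultimately have "(\<integral>\<^sup>+t. ennreal (norm (indicator {0<..} t *\<^sub>R (exp (- s * t) * f t))) \<partial>lborel) < \<infinity>"
    using r(3) by simp
  then show "set_integrable lborel {0<..} (\<lambda>t. exp (- s * t) * f t)"
    unfolding set_integrable_def by (intro integrableI_bounded) auto
qed

lemma laplace_identity_if_nn_laplace_identity:
  fixes u w R :: "real \<Rightarrow> real" and k :: real
  assumes [measurable]: "u \<in> borel_measurable borel" "w \<in> borel_measurable borel"
    and u_nonneg: "\<And>t. t > 0 \<Longrightarrow> u t \<ge> 0" and w_nonneg: "\<And>t. t > 0 \<Longrightarrow> w t \<ge> 0"
    and "k > 0" and R_nonneg: "\<And>s. s > 0 \<Longrightarrow> R s \<ge> 0"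
    and identity: "AE s in lborel. s > 0 \<longrightarrow>
      (\<integral>\<^sup>+t. ennreal (exp (- s * t) * (u t + k * s * w t)) * indicator {0<..} t \<partial>lborel) = ennreal (R s)"
  shows "laplace_integrable u" and "laplace_integrable w"
    and "AE s in lborel. s > 0 \<longrightarrow> laplace u s + k * s * laplace w s = R s"
proof -
  have "AE s in lborel. s > 0 \<longrightarrow>
      (\<integral>\<^sup>+t. ennreal (exp (- s * t) * u t) * indicator {0<..} t \<partial>lborel) < \<infinity> \<and>
      (\<integral>\<^sup>+t. ennreal (exp (- s * t) * w t) * indicator {0<..} t \<partial>lborel) < \<infinity>"
    using identity
  proof eventually_elim
    case (elim s)
    show ?case
    proof
      assume "s > 0"
      let ?sum = "\<integral>\<^sup>+t. ennreal (exp (- s * t) * (u t + k * s * w t)) * indicator {0<..} t \<partial>lborel"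
      have "(\<integral>\<^sup>+t. ennreal (exp (- s * t) * u t) * indicator {0<..} t \<partial>lborel) \<le> ?sum"
        using u_nonneg w_nonneg \<open>k > 0\<close> \<open>s > 0\<close>
        by (intro nn_integral_mono) (auto simp: indicator_def intro!: ennreal_leI mult_left_mono)
      moreover have "(\<integral>\<^sup>+t. ennreal (exp (- s * t) * w t) * indicator {0<..} t \<partial>lborel) \<le>
          (\<integral>\<^sup>+t. ennreal (1 / (k * s)) * (ennreal (exp (- s * t) * (u t + k * s * w t)) * indicator {0<..} t) \<partial>lborel)"
        using u_nonneg w_nonneg \<open>k > 0\<close> \<open>s > 0\<close>
        by (intro nn_integral_mono)
           (auto simp: indicator_def field_simps simp flip: ennreal_mult intro!: ennreal_leI mult_left_mono)
      ultimately show "(\<integral>\<^sup>+t. ennreal (exp (- s * t) * u t) * indicator {0<..} t \<partial>lborel) < \<infinity> \<and>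
          (\<integral>\<^sup>+t. ennreal (exp (- s * t) * w t) * indicator {0<..} t \<partial>lborel) < \<infinity>"
        using elim \<open>s > 0\<close> by (simp add: nn_integral_cmult ennreal_mult_less_top order_le_less_trans)
    qed
  qed
  then show u: "laplace_integrable u" and w: "laplace_integrable w"
    using u_nonneg w_nonneg by (auto intro!: laplace_integrable_if_AE_finite elim: AE_mp)
  show "AE s in lborel. s > 0 \<longrightarrow> laplace u s + k * s * laplace w s = R s"
    using identity
  proof eventually_elim
    case (elim s)
    show ?case
    proof
      assume "s > 0"
      have sum: "laplace_integrable (\<lambda>t. u t + k * s * w t)"
        by (intro laplace_integrable_add laplace_integrable_cmult u w)
      have "ennreal (laplace (\<lambda>t. u t + k * s * w t) s) = ennreal (R s)"
        unfolding laplace_def using elim \<open>s > 0\<close> u_nonneg w_nonneg \<open>k > 0\<close>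
        by (subst nn_integral_eq_set_integral[symmetric, OF laplace_integrableD[OF sum \<open>s > 0\<close>]]) auto
      moreover have "laplace (\<lambda>t. u t + k * s * w t) s \<ge> 0"
        using u_nonneg w_nonneg \<open>k > 0\<close> \<open>s > 0\<close> unfolding laplace_def by (intro set_integral_nonneg) simp
      ultimately have "laplace (\<lambda>t. u t + k * s * w t) s = R s"
        using R_nonneg[OF \<open>s > 0\<close>] by simp
      then show "laplace u s + k * s * laplace w s = R s"
        using laplace_add[OF u laplace_integrable_cmult[OF w] \<open>s > 0\<close>] by (simp add: laplace_cmult)
    qed
  qed
qed

lemma laplace_identity_solution:
  fixes h g F :: "real \<Rightarrow> real" and p q lam :: real
  assumes [measurable]: "h \<in> borel_measurable borel" and h_nonneg: "\<And>x. x > 0 \<Longrightarrow> h x \<ge> 0"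
    and "p \<ge> 0" "q > 0" "lam > 0" and "has_laplace g F" and F_nonneg: "\<And>s. s > 0 \<Longrightarrow> F s \<ge> 0"
    and identity: "AE s in lborel. s > 0 \<longrightarrow>
      (\<integral>\<^sup>+x. ennreal (exp (- s * x) * (p * x * h x + q / lam * s * (x\<^sup>2 * h x))) * indicator {0<..} x \<partial>lborel) =
      ennreal (lam\<^sup>2 * F s)"
  shows "AE x in lborel. x > 0 \<longrightarrow>
    x powr (lam * p / q + 2) * h x = lam ^ 3 / q * (LINT \<xi>:{0<..x}|lborel. \<xi> powr (lam * p / q) * g \<xi>)"
proof -
  define a where "a = lam * p / q"
  define c where "c = lam ^ 3 / q"
  \<comment> \<open>only the values of \<open>g\<close> on \<open>(0, \<infinity>)\<close> are constrained, so cut it off there to get a measurable function\<close>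
  define g_cut where "g_cut t = c * (indicator {0<..} t * g t)" for t
  have g: "laplace_integrable g" "\<And>s. s > 0 \<Longrightarrow> laplace g s = F s"
    using \<open>has_laplace g F\<close> by (auto simp: has_laplace_iff)
  have [measurable]: "g_cut \<in> borel_measurable borel"
  proof -
    have "(\<lambda>t. indicator {0<..} t *\<^sub>R (exp (- 1 * t) * g t)) \<in> borel_measurable borel"
      using laplace_integrableD[OF g(1), of 1] unfolding set_integrable_def
      by (auto dest: borel_measurable_integrable)
    then have "(\<lambda>t. c * (exp t * (indicator {0<..} t *\<^sub>R (exp (- 1 * t) * g t)))) \<in> borel_measurable borel"
      by measurable
    then show ?thesis
      by (simp add: g_cut_def exp_minus field_simps cong: measurable_cong)
  qed
  have cut_off: "set_integrable lborel {0<..} (\<lambda>t. exp (- s * t) * g_cut t) \<longleftrightarrow>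
      set_integrable lborel {0<..} (\<lambda>t. exp (- s * t) * (c * g t))" for s
    by (rule set_integrable_cong) (auto simp: g_cut_def)
  have laplace_cut_off: "laplace g_cut s = c * laplace g s" for s
    by (auto intro!: set_lebesgue_integral_cong simp: g_cut_def laplace_def mult.left_commute[of _ c])
  have g_cut: "laplace_integrable g_cut"
    using laplace_integrable_cmult[OF g(1), of c] by (simp only: laplace_integrable_def cut_off)
  note L = laplace_identity_if_nn_laplace_identity[of "\<lambda>x. p * x * h x" "\<lambda>x. x\<^sup>2 * h x" "q / lam"
      "\<lambda>s. lam\<^sup>2 * F s", OF _ _ _ _ _ _ identity]
  have v: "laplace_integrable (\<lambda>x. a * x * h x)" and w: "laplace_integrable (\<lambda>x. x\<^sup>2 * h x)"
    and identity': "AE s in lborel. s > 0 \<longrightarrow> laplace (\<lambda>x. p * x * h x) s + q / lam * s * laplace (\<lambda>x. x\<^sup>2 * h x) s = lam\<^sup>2 * F s"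
    using L laplace_integrable_cmult[OF L(1), of "lam / q"] h_nonneg F_nonneg \<open>p \<ge> 0\<close> \<open>q > 0\<close> \<open>lam > 0\<close>
    by (simp_all add: a_def mult_ac)
  have "AE s in lborel. s > 0 \<longrightarrow> laplace (\<lambda>x. a * x * h x) s + s * laplace (\<lambda>x. x\<^sup>2 * h x) s = laplace g_cut s"
    using identity'
  proof eventually_elim
    case (elim s)
    have "(\<lambda>x. a * x * h x) = (\<lambda>x. lam / q * (p * x * h x))"
      by (simp add: a_def fun_eq_iff)
    then have "laplace (\<lambda>x. a * x * h x) s = lam / q * laplace (\<lambda>x. p * x * h x) s"
      by (simp only: laplace_cmult)
    then show ?case
      using elim \<open>q > 0\<close> \<open>lam > 0\<close>
      by (auto simp: laplace_cut_off g(2) c_def field_simps power2_eq_square power3_eq_cube)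
  qed
  then have "AE t in lborel. t > 0 \<longrightarrow>
      t\<^sup>2 * h t + (LINT \<xi>:{0<..t}|lborel. a * \<xi> * h \<xi>) = (LINT \<xi>:{0<..t}|lborel. g_cut \<xi>)"
    by (intro integral_equation_if_laplace_identity v w g_cut) simp_all
  then have "AE x in lborel. x > 0 \<longrightarrow> x powr (a + 2) * h x = (LINT \<xi>:{0<..x}|lborel. \<xi> powr a * g_cut \<xi>)"
    using \<open>p \<ge> 0\<close> \<open>q > 0\<close> \<open>lam > 0\<close>
    by (intro integral_equation_solution set_integrable_Ioc_if_laplace[of _ 1]
          laplace_integrableD[OF v] laplace_integrableD[OF g_cut]) (simp_all add: a_def)
  moreover have "(LINT \<xi>:{0<..x}|lborel. \<xi> powr a * g_cut \<xi>) = c * (LINT \<xi>:{0<..x}|lborel. \<xi> powr a * g \<xi>)" for x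
    by (auto simp: g_cut_def mult.left_commute[of _ c] simp flip: set_integral_mult_right
             intro!: set_lebesgue_integral_cong)
  ultimately show ?thesis
    by (simp add: a_def c_def)
qed

section \<open>The density of the scaled ratio\<close>

lemma nn_integral_Ioc_0_1_substitution:
  fixes f :: "real \<Rightarrow> ennreal"
  assumes [measurable]: "f \<in> borel_measurable borel" and "lam > 0"
  shows "(\<integral>\<^sup>+z. f z * indicator {0<..1} z \<partial>lborel) =
         (\<integral>\<^sup>+s. f (lam / (s + lam)) * ennreal (lam / (s + lam)\<^sup>2) * indicator {0..} s \<partial>lborel)"
proof -
  define g where "g t = lam / (lam - t)" for t :: real
  define g' where "g' t = lam / (lam - t)\<^sup>2" for t :: real
  have g_nat: "g (- real (Suc n)) = lam / (lam + real (Suc n))" for n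
    by (simp add: g_def)
  have g_0: "g 0 = 1"
    using \<open>lam > 0\<close> by (simp add: g_def)
  have "(\<integral>\<^sup>+z. f z * indicator {g (- real (Suc n))..g 0} z \<partial>lborel) =
      (\<integral>\<^sup>+t. f (g t) * g' t * indicator {- real (Suc n)..0} t \<partial>lborel)" for n
  proof (rule nn_integral_substitution_aux)
    show "(g has_real_derivative g' t) (at t)" if "t \<in> {- real (Suc n)..0}" for t
      using that \<open>lam > 0\<close> unfolding g_def g'_def
      by (auto intro!: derivative_eq_intros simp: power2_eq_square field_simps)
  qed (use \<open>lam > 0\<close> in \<open>auto simp: g_def g'_def intro!: continuous_intros\<close>)
  moreover have "(\<lambda>n. \<integral>\<^sup>+z. f z * indicator {g (- real (Suc n))..g 0} z \<partial>lborel) \<longlonglongrightarrow>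
      (\<integral>\<^sup>+z. f z * indicator {0<..1} z \<partial>lborel)"
  proof -
    have "(\<Union>n. {lam / (lam + real (Suc n))..1}) = {0<..1}"
    proof (intro equalityI subsetI)
      fix z :: real
      assume "z \<in> (\<Union>n. {lam / (lam + real (Suc n))..1})"
      then obtain n where "lam / (lam + real (Suc n)) \<le> z" "z \<le> 1"
        by auto
      moreover have "0 < lam / (lam + real (Suc n))"
        using \<open>lam > 0\<close> by (simp add: add_pos_pos)
      ultimately have "0 < z" "z \<le> 1"
        by linarith+
      then show "z \<in> {0<..1}"
        by simp
    next
      fix z :: real
      assume "z \<in> {0<..1}"
      moreover obtain n :: nat where "lam / z < real n"
        using reals_Archimedean2 by blast
      ultimately have "lam < z * real n" "0 \<le> z * lam + z"
        using \<open>lam > 0\<close> by (simp_all add: divide_less_eq mult.commute)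
      then have "lam \<le> z * (lam + real (Suc n))"
        by (simp add: algebra_simps)
      then have "lam / (lam + real (Suc n)) \<le> z"
        using \<open>lam > 0\<close> by (simp add: pos_divide_le_eq add_pos_pos)
      with \<open>z \<in> {0<..1}\<close> show "z \<in> (\<Union>n. {lam / (lam + real (Suc n))..1})"
        by auto
    qed
    moreover have "incseq (\<lambda>n. {lam / (lam + real (Suc n))..1})"
    proof (rule incseq_SucI)
      fix n
      have "lam / (lam + real (Suc (Suc n))) \<le> lam / (lam + real (Suc n))"
        using \<open>lam > 0\<close> by (intro divide_left_mono) auto
      then show "{lam / (lam + real (Suc n))..1} \<subseteq> {lam / (lam + real (Suc (Suc n)))..1}"
        by auto
    qed
    ultimately show ?thesis
      using tendsto_nn_integral_incseq_indicator[of f "\<lambda>n. {lam / (lam + real (Suc n))..1}"] \<open>lam > 0\<close>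
      by (simp add: g_nat g_0 del: of_nat_Suc)
  qed
  moreover have "(\<lambda>n. \<integral>\<^sup>+t. f (g t) * g' t * indicator {- real (Suc n)..0} t \<partial>lborel) \<longlonglongrightarrow>
      (\<integral>\<^sup>+t. f (g t) * g' t * indicator {..0} t \<partial>lborel)"
  proof -
    have "(\<Union>n. {- real (Suc n)..0}) = {..0}"
    proof (intro equalityI subsetI)
      fix t :: real
      assume "t \<in> {..0}"
      moreover obtain n :: nat where "- t < real n"
        using reals_Archimedean2 by blast
      ultimately show "t \<in> (\<Union>n. {- real (Suc n)..0})"
        by (intro UN_I[of n]) auto
    qed auto
    moreover have "incseq (\<lambda>n. {- real (Suc n)..0})"
      by (rule incseq_SucI) auto
    ultimately show ?thesis
      using tendsto_nn_integral_incseq_indicator[of "\<lambda>t. f (g t) * g' t" "\<lambda>n. {- real (Suc n)..0}"]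
      by (simp add: g_def g'_def)
  qed
  ultimately have "(\<integral>\<^sup>+z. f z * indicator {0<..1} z \<partial>lborel) = (\<integral>\<^sup>+t. f (g t) * g' t * indicator {..0} t \<partial>lborel)"
    using LIMSEQ_unique by simp
  also have "\<dots> = (\<integral>\<^sup>+s. f (g (0 + (- 1) * s)) * g' (0 + (- 1) * s) * indicator {..0} (0 + (- 1) * s) \<partial>lborel)"
    by (subst nn_integral_real_affine[of _ "- 1" 0]) (auto simp: g_def g'_def)
  also have "\<dots> = (\<integral>\<^sup>+s. f (lam / (s + lam)) * ennreal (lam / (s + lam)\<^sup>2) * indicator {0..} s \<partial>lborel)"
    by (intro nn_integral_cong) (auto simp: g_def g'_def indicator_def add.commute)
  finally show ?thesis .
qed

lemma density_AE_nonpos_eq_0: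
  fixes X :: "'a \<Rightarrow> real" and f :: "real \<Rightarrow> real"
  assumes f_nonneg: "\<And>x. f x \<ge> 0"
    and density: "distributed M lborel X (\<lambda>x. ennreal (f x))" and pos: "AE \<omega> in M. X \<omega> > 0"
  shows "AE x in lborel. x \<le> 0 \<longrightarrow> f x = 0"
proof -
  have [measurable]: "X \<in> measurable M lborel" "(\<lambda>x. ennreal (f x)) \<in> borel_measurable lborel"
    using density by (auto simp: distributed_def)
  have "emeasure M (X -` {..0} \<inter> space M) = (\<integral>\<^sup>+x. ennreal (f x) * indicator {..0} x \<partial>lborel)"
    by (rule distributed_emeasure[OF density]) (simp add: atMost_borel)
  moreover have "emeasure M (X -` {..0} \<inter> space M) = 0"
  proof -
    have "X -` {..0} \<inter> space M = {\<omega> \<in> space M. \<not> X \<omega> > 0}" by auto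
    moreover have "{\<omega> \<in> space M. \<not> X \<omega> > 0} \<in> sets M" by measurable
    ultimately show ?thesis
      using AE_iff_measurable[of "{\<omega> \<in> space M. \<not> X \<omega> > 0}" M "\<lambda>\<omega>. X \<omega> > 0"] pos by simp
  qed
  ultimately have "(\<integral>\<^sup>+x. ennreal (f x) * indicator {..0} x \<partial>lborel) = 0" by simp
  then have "AE x in lborel. ennreal (f x) * indicator {..0} x = 0"
    by (subst (asm) nn_integral_0_iff_AE) auto
  then show ?thesis
    by eventually_elim (use f_nonneg in \<open>auto simp: indicator_def\<close>)
qed

lemma nn_integral_ratio_substitution:
  fixes f :: "real \<Rightarrow> real"
  assumes [measurable]: "f \<in> borel_measurable borel" "A \<in> sets borel"
    and supp: "AE y in lborel. y \<le> 0 \<longrightarrow> f y = 0" and "x > 0" "lam > 0"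
  shows "(\<integral>\<^sup>+y. ennreal (f y) * indicator A (lam * y / x) \<partial>lborel) =
    ennreal (x / lam) * (\<integral>\<^sup>+s. ennreal (f (s * x / lam)) * indicator {0<..} s * indicator A s \<partial>lborel)"
proof -
  have "(\<integral>\<^sup>+y. ennreal (f y) * indicator A (lam * y / x) \<partial>lborel) =
      (\<integral>\<^sup>+y. ennreal (f y) * indicator {0<..} y * indicator A (lam * y / x) \<partial>lborel)"
    by (intro nn_integral_cong_AE, use supp in eventually_elim) (auto simp: indicator_def)
  also have "\<dots> = ennreal \<bar>x / lam\<bar> * (\<integral>\<^sup>+s. ennreal (f (0 + x / lam * s)) * indicator {0<..} (0 + x / lam * s) *
      indicator A (lam * (0 + x / lam * s) / x) \<partial>lborel)"
    using \<open>x > 0\<close> \<open>lam > 0\<close> by (intro nn_integral_real_affine) auto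
  also have "\<dots> = ennreal (x / lam) * (\<integral>\<^sup>+s. ennreal (f (s * x / lam)) * indicator {0<..} s * indicator A s \<partial>lborel)"
  proof -
    have "0 < x / lam * s \<longleftrightarrow> 0 < s" "lam * (x / lam * s) / x = s" "x / lam * s = s * x / lam" for s
      using \<open>x > 0\<close> \<open>lam > 0\<close> by (auto simp: zero_less_mult_iff zero_less_divide_iff)
    then show ?thesis
      using \<open>x > 0\<close> \<open>lam > 0\<close> by (simp add: indicator_def mult.commute)
  qed
  finally show ?thesis .
qed

lemma nn_integral_scaled_ratio:
  fixes fX fY :: "real \<Rightarrow> real"
  assumes [measurable]: "fX \<in> borel_measurable borel" "fY \<in> borel_measurable borel" "A \<in> sets borel"
    and "\<And>x. fX x \<ge> 0" "\<And>y. fY y \<ge> 0"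
    and supp_X: "AE x in lborel. x \<le> 0 \<longrightarrow> fX x = 0" and supp_Y: "AE y in lborel. y \<le> 0 \<longrightarrow> fY y = 0"
    and "lam > 0"
  shows "(\<integral>\<^sup>+x. \<integral>\<^sup>+y. ennreal (fX x) * ennreal (fY y) * indicator A (lam * y / x) \<partial>lborel \<partial>lborel) =
    (\<integral>\<^sup>+s. (\<integral>\<^sup>+x. ennreal (fX x) * ennreal (fY (s * x / lam)) * ennreal (x / lam) * indicator {0<..} x \<partial>lborel) *
      indicator {0<..} s * indicator A s \<partial>lborel)"
proof -
  let ?k = "\<lambda>x s. ennreal (fX x) * ennreal (fY (s * x / lam)) * ennreal (x / lam) * indicator {0<..} x *
    (indicator {0<..} s * indicator A s)"
  have "(\<integral>\<^sup>+x. \<integral>\<^sup>+y. ennreal (fX x) * ennreal (fY y) * indicator A (lam * y / x) \<partial>lborel \<partial>lborel) =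
      (\<integral>\<^sup>+x. \<integral>\<^sup>+s. ?k x s \<partial>lborel \<partial>lborel)"
  proof (intro nn_integral_cong_AE, use supp_X in eventually_elim)
    case (elim x)
    show ?case
    proof (cases "x > 0")
      case True
      have "(\<integral>\<^sup>+y. ennreal (fX x) * ennreal (fY y) * indicator A (lam * y / x) \<partial>lborel) =
          ennreal (fX x) * (\<integral>\<^sup>+y. ennreal (fY y) * indicator A (lam * y / x) \<partial>lborel)"
        by (subst nn_integral_cmult[symmetric]) (auto simp: mult.assoc)
      also have "\<dots> = ennreal (fX x) * (ennreal (x / lam) *
          (\<integral>\<^sup>+s. ennreal (fY (s * x / lam)) * indicator {0<..} s * indicator A s \<partial>lborel))"
        by (simp only: nn_integral_ratio_substitution[OF assms(2,3) supp_Y True \<open>lam > 0\<close>])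
      also have "\<dots> = (\<integral>\<^sup>+s. ?k x s \<partial>lborel)"
        using True by (simp add: nn_integral_cmult[symmetric] mult_ac)
      finally show ?thesis .
    qed (use elim in simp)
  qed
  also have "\<dots> = (\<integral>\<^sup>+s. \<integral>\<^sup>+x. ?k x s \<partial>lborel \<partial>lborel)"
    by (subst lborel_pair.Fubini') (auto simp: case_prod_unfold)
  also have "\<dots> = (\<integral>\<^sup>+s. (\<integral>\<^sup>+x. ennreal (fX x) * ennreal (fY (s * x / lam)) * ennreal (x / lam) *
      indicator {0<..} x \<partial>lborel) * indicator {0<..} s * indicator A s \<partial>lborel)"
    by (subst nn_integral_multc) (auto simp: mult.assoc)
  finally show ?thesis .
qed

lemma distr_scaled_ratio_indep:
  fixes X Y :: "'a \<Rightarrow> real" and fX fY :: "real \<Rightarrow> real"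
  assumes "prob_space M" and fX_nonneg: "\<And>x. fX x \<ge> 0" and fY_nonneg: "\<And>x. fY x \<ge> 0"
    and dX: "distributed M lborel X (\<lambda>x. ennreal (fX x))" and dY: "distributed M lborel Y (\<lambda>x. ennreal (fY x))"
    and "AE \<omega> in M. X \<omega> > 0" "AE \<omega> in M. Y \<omega> > 0"
    and "prob_space.indep_var M borel X borel Y" and "lam > 0"
  shows "distr M lborel (\<lambda>\<omega>. lam * Y \<omega> / X \<omega>) =
    density lborel (\<lambda>s. (\<integral>\<^sup>+x. ennreal (fX x) * ennreal (fY (s * x / lam)) * ennreal (x / lam) *
      indicator {0<..} x \<partial>lborel) * indicator {0<..} s)"
proof (rule measure_eqI)
  interpret prob_space M by fact
  have [measurable]: "X \<in> measurable M borel" "Y \<in> measurable M borel"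
    "fX \<in> borel_measurable borel" "fY \<in> borel_measurable borel"
    using dX dY fX_nonneg fY_nonneg by (auto simp: distributed_def)
  have joint: "distributed M (lborel \<Otimes>\<^sub>M lborel) (\<lambda>\<omega>. (X \<omega>, Y \<omega>)) (\<lambda>(x, y). ennreal (fX x) * ennreal (fY y))"
    using \<open>prob_space.indep_var M borel X borel Y\<close>
    by (intro distributed_joint_indep[OF sigma_finite_lborel sigma_finite_lborel dX dY]) (simp add: indep_var_eq)
  fix A assume "A \<in> sets (distr M lborel (\<lambda>\<omega>. lam * Y \<omega> / X \<omega>))"
  then have [measurable]: "A \<in> sets borel" by simp
  have "emeasure (distr M lborel (\<lambda>\<omega>. lam * Y \<omega> / X \<omega>)) A = (\<integral>\<^sup>+\<omega>. indicator A (lam * Y \<omega> / X \<omega>) \<partial>M)"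
    by (subst emeasure_distr) (auto simp flip: nn_integral_indicator intro!: nn_integral_cong simp: indicator_def)
  also have "\<dots> = (\<integral>\<^sup>+p. (case p of (x, y) \<Rightarrow> ennreal (fX x) * ennreal (fY y)) *
      indicator A (lam * snd p / fst p) \<partial>(lborel \<Otimes>\<^sub>M lborel))"
    by (subst distributed_nn_integral[OF joint]) auto
  also have "\<dots> = (\<integral>\<^sup>+x. \<integral>\<^sup>+y. ennreal (fX x) * ennreal (fY y) * indicator A (lam * y / x) \<partial>lborel \<partial>lborel)"
    by (subst lborel.nn_integral_fst[symmetric]) auto
  also have "\<dots> = emeasure (density lborel (\<lambda>s. (\<integral>\<^sup>+x. ennreal (fX x) * ennreal (fY (s * x / lam)) *
      ennreal (x / lam) * indicator {0<..} x \<partial>lborel) * indicator {0<..} s)) A"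
    using density_AE_nonpos_eq_0[OF assms(2,4,6)] density_AE_nonpos_eq_0[OF assms(3,5,7)]
    by (subst nn_integral_scaled_ratio) (auto simp: emeasure_density fX_nonneg fY_nonneg \<open>lam > 0\<close>)
  finally show "emeasure (distr M lborel (\<lambda>\<omega>. lam * Y \<omega> / X \<omega>)) A = emeasure (density lborel
      (\<lambda>s. (\<integral>\<^sup>+x. ennreal (fX x) * ennreal (fY (s * x / lam)) * ennreal (x / lam) * indicator {0<..} x \<partial>lborel) *
        indicator {0<..} s)) A" .
qed simp

lemma nn_integral_odds_substitution:
  fixes f :: "real \<Rightarrow> real"
  assumes [measurable]: "f \<in> borel_measurable borel" "A \<in> sets borel" and "lam > 0"
  shows "(\<integral>\<^sup>+z. ennreal (f z) * indicator (A \<inter> {0<..}) (lam * (1 - z) / z) \<partial>lborel) =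
    (\<integral>\<^sup>+s. ennreal (f (lam / (s + lam))) * ennreal (lam / (s + lam)\<^sup>2) * indicator {0<..} s * indicator A s \<partial>lborel)"
proof -
  have odds_pos: "z \<in> {0<..1}" if "lam * (1 - z) / z > 0" for z
    using that \<open>lam > 0\<close> by (auto simp: zero_less_divide_iff zero_less_mult_iff mult_less_0_iff)
  have "(\<integral>\<^sup>+z. ennreal (f z) * indicator (A \<inter> {0<..}) (lam * (1 - z) / z) \<partial>lborel) =
      (\<integral>\<^sup>+z. ennreal (f z) * indicator (A \<inter> {0<..}) (lam * (1 - z) / z) * indicator {0<..1} z \<partial>lborel)"
  proof (intro nn_integral_cong)
    fix z :: real
    show "ennreal (f z) * indicator (A \<inter> {0<..}) (lam * (1 - z) / z) =
        ennreal (f z) * indicator (A \<inter> {0<..}) (lam * (1 - z) / z) * indicator {0<..1} z"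
      using odds_pos[of z] by (cases "lam * (1 - z) / z > 0") (simp_all add: indicator_def)
  qed
  also have "\<dots> = (\<integral>\<^sup>+s. ennreal (f (lam / (s + lam))) *
      indicator (A \<inter> {0<..}) (lam * (1 - lam / (s + lam)) / (lam / (s + lam))) *
      ennreal (lam / (s + lam)\<^sup>2) * indicator {0..} s \<partial>lborel)"
    by (rule nn_integral_Ioc_0_1_substitution[OF _ \<open>lam > 0\<close>]) measurable
  also have "\<dots> = (\<integral>\<^sup>+s. ennreal (f (lam / (s + lam))) * ennreal (lam / (s + lam)\<^sup>2) *
      indicator {0<..} s * indicator A s \<partial>lborel)"
  proof (intro nn_integral_cong)
    fix s :: real
    have "lam * (1 - lam / (s + lam)) / (lam / (s + lam)) = s" if "s \<ge> 0"
    proof -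
      have "s + lam \<noteq> 0" "1 - lam / (s + lam) = s / (s + lam)"
        using that \<open>lam > 0\<close> by (simp_all add: field_simps)
      then show ?thesis
        using \<open>lam > 0\<close> by simp
    qed
    then show "ennreal (f (lam / (s + lam))) * indicator (A \<inter> {0<..}) (lam * (1 - lam / (s + lam)) / (lam / (s + lam))) *
        ennreal (lam / (s + lam)\<^sup>2) * indicator {0..} s =
        ennreal (f (lam / (s + lam))) * ennreal (lam / (s + lam)\<^sup>2) * indicator {0<..} s * indicator A s"
      by (cases "s \<ge> 0") (auto simp: indicator_def)
  qed
  finally show ?thesis .
qed

lemma distr_scaled_ratio_via_quotient:
  fixes X Y Z :: "'a \<Rightarrow> real" and fZ :: "real \<Rightarrow> real"
  assumes "prob_space M" and "\<And>x. fZ x \<ge> 0"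
    and dZ: "distributed M lborel Z (\<lambda>x. ennreal (fZ x))"
    and [measurable]: "X \<in> borel_measurable M" "Y \<in> borel_measurable M"
    and pos: "AE \<omega> in M. X \<omega> > 0" "AE \<omega> in M. Y \<omega> > 0"
    and quotient: "distr M borel Z = distr M borel (\<lambda>\<omega>. X \<omega> / (X \<omega> + Y \<omega>))" and "lam > 0"
  shows "distr M lborel (\<lambda>\<omega>. lam * Y \<omega> / X \<omega>) =
    density lborel (\<lambda>s. ennreal (fZ (lam / (s + lam))) * ennreal (lam / (s + lam)\<^sup>2) * indicator {0<..} s)"
proof (rule measure_eqI)
  interpret prob_space M by fact
  have [measurable]: "Z \<in> borel_measurable M" "fZ \<in> borel_measurable borel"
    using dZ assms(2) by (auto simp: distributed_def)
  \<comment> \<open>\<open>\<lambda> Y / X\<close> is the positive number \<open>\<lambda> (1 - z) / z\<close> at \<open>z = X / (X + Y)\<close>\<close>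
  define odds where "odds z = lam * (1 - z) / z" for z :: real
  fix A assume "A \<in> sets (distr M lborel (\<lambda>\<omega>. lam * Y \<omega> / X \<omega>))"
  then have [measurable]: "A \<in> sets borel" by simp
  have "emeasure (distr M lborel (\<lambda>\<omega>. lam * Y \<omega> / X \<omega>)) A = (\<integral>\<^sup>+\<omega>. indicator A (lam * Y \<omega> / X \<omega>) \<partial>M)"
    by (subst emeasure_distr) (auto simp flip: nn_integral_indicator intro!: nn_integral_cong simp: indicator_def)
  also have "\<dots> = (\<integral>\<^sup>+\<omega>. indicator (A \<inter> {0<..}) (odds (X \<omega> / (X \<omega> + Y \<omega>))) \<partial>M)"
  proof (rule nn_integral_cong_AE)
    show "AE \<omega> in M. indicator A (lam * Y \<omega> / X \<omega>) = indicator (A \<inter> {0<..}) (odds (X \<omega> / (X \<omega> + Y \<omega>)))"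
      using pos
    proof eventually_elim
      case (elim \<omega>)
      then have "1 - X \<omega> / (X \<omega> + Y \<omega>) = Y \<omega> / (X \<omega> + Y \<omega>)"
        by (simp add: field_simps)
      then have "odds (X \<omega> / (X \<omega> + Y \<omega>)) = lam * Y \<omega> / X \<omega>"
        using elim by (simp add: odds_def)
      then show ?case
        using elim \<open>lam > 0\<close> by (auto simp: indicator_def)
    qed
  qed
  also have "\<dots> = (\<integral>\<^sup>+z. indicator (A \<inter> {0<..}) (odds z) \<partial>distr M borel Z)"
    unfolding quotient by (subst nn_integral_distr) (auto simp: odds_def)
  also have "\<dots> = (\<integral>\<^sup>+z. ennreal (fZ z) * indicator (A \<inter> {0<..}) (odds z) \<partial>lborel)"
    by (subst nn_integral_distr) (auto simp: distributed_nn_integral[OF dZ] odds_def)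
  also have "\<dots> = emeasure (density lborel
      (\<lambda>s. ennreal (fZ (lam / (s + lam))) * ennreal (lam / (s + lam)\<^sup>2) * indicator {0<..} s)) A"
    unfolding odds_def using \<open>lam > 0\<close> by (simp add: nn_integral_odds_substitution emeasure_density)
  finally show "emeasure (distr M lborel (\<lambda>\<omega>. lam * Y \<omega> / X \<omega>)) A = emeasure (density lborel
      (\<lambda>s. ennreal (fZ (lam / (s + lam))) * ennreal (lam / (s + lam)\<^sup>2) * indicator {0<..} s)) A" .
qed simp

lemma ratio_densities_AE_eq:
  fixes X Y Z :: "'a \<Rightarrow> real" and fX fY fZ :: "real \<Rightarrow> real"
  assumes "prob_space M" and fX_nonneg: "\<And>x. fX x \<ge> 0" and fY_nonneg: "\<And>x. fY x \<ge> 0" and "\<And>x. fZ x \<ge> 0"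
    and "distributed M lborel X (\<lambda>x. ennreal (fX x))" "distributed M lborel Y (\<lambda>x. ennreal (fY x))"
    and "distributed M lborel Z (\<lambda>x. ennreal (fZ x))"
    and "AE \<omega> in M. X \<omega> > 0" "AE \<omega> in M. Y \<omega> > 0" and "prob_space.indep_var M borel X borel Y"
    and "distr M borel Z = distr M borel (\<lambda>\<omega>. X \<omega> / (X \<omega> + Y \<omega>))" and "lam > 0"
  shows "AE s in lborel. s > 0 \<longrightarrow>
    (\<integral>\<^sup>+x. ennreal (fX x * fY (s * x / lam) * (x / lam)) * indicator {0<..} x \<partial>lborel) =
    ennreal (fZ (lam / (s + lam)) * (lam / (s + lam)\<^sup>2))"
proof -
  have [measurable]: "X \<in> borel_measurable M" "Y \<in> borel_measurable M"
    "fX \<in> borel_measurable borel" "fY \<in> borel_measurable borel" "fZ \<in> borel_measurable borel"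
    using assms(2-7) by (auto simp: distributed_def)
  have "AE s in lborel.
    (\<integral>\<^sup>+x. ennreal (fX x) * ennreal (fY (s * x / lam)) * ennreal (x / lam) * indicator {0<..} x \<partial>lborel) *
      indicator {0<..} s =
    ennreal (fZ (lam / (s + lam))) * ennreal (lam / (s + lam)\<^sup>2) * indicator {0<..} s"
    using distr_scaled_ratio_indep[OF assms(1-3,5,6,8-10,12)] distr_scaled_ratio_via_quotient[OF assms(1,4,7) _ _ assms(8,9,11,12)]
    by (intro sigma_finite_measure.density_unique[OF sigma_finite_lborel]) auto
  then show ?thesis
  proof eventually_elim
    case (elim s)
    have integrand: "ennreal (fX x) * ennreal (fY (s * x / lam)) * ennreal (x / lam) * indicator {0<..} x =
        ennreal (fX x * fY (s * x / lam) * (x / lam)) * indicator {0<..} x" for x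
      using fX_nonneg[of x] fY_nonneg[of "s * x / lam"] \<open>lam > 0\<close>
      by (cases "x > 0") (auto simp: ennreal_mult' simp flip: times_divide_eq_right)
    have density_Z: "ennreal (fZ (lam / (s + lam)) * (lam / (s + lam)\<^sup>2)) =
        ennreal (fZ (lam / (s + lam))) * ennreal (lam / (s + lam)\<^sup>2)"
      by (rule ennreal_mult'[OF assms(4)])
    show ?case
      using elim by (cases "s > 0") (simp_all add: integrand flip: density_Z)
  qed
qed

lemma nn_integral_decomposed_ratio:
  fixes fX fY A B C h :: "real \<Rightarrow> real" and p q lam s :: real
  assumes decomposition: "\<And>s x. s > 0 \<Longrightarrow> x > 0 \<Longrightarrow> fY (s * x) = A s * B x * C (s * x)"
    and C_eq: "\<And>x. x > 0 \<Longrightarrow> C x = (p + q * x) * exp (- lam * x)" and A_pos: "\<And>s. s > 0 \<Longrightarrow> A s > 0"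
    and [measurable]: "h \<in> borel_measurable borel"
    and h_eq: "\<And>x. x > 0 \<Longrightarrow> h x = B x * fX x" and h_nonneg: "\<And>x. x > 0 \<Longrightarrow> h x \<ge> 0"
    and "p \<ge> 0" "q > 0" "lam > 0" "s > 0"
  shows "(\<integral>\<^sup>+x. ennreal (fX x * fY (s * x / lam) * (x / lam)) * indicator {0<..} x \<partial>lborel) =
    ennreal (A (s / lam) / lam) *
    (\<integral>\<^sup>+x. ennreal (exp (- s * x) * (p * x * h x + q / lam * s * (x\<^sup>2 * h x))) * indicator {0<..} x \<partial>lborel)"
proof -
  let ?K = "\<lambda>x. exp (- s * x) * (p * x * h x + q / lam * s * (x\<^sup>2 * h x))"
  have A: "A (s / lam) / lam > 0"
    using A_pos \<open>s > 0\<close> \<open>lam > 0\<close> by simp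
  have "ennreal (fX x * fY (s * x / lam) * (x / lam)) * indicator {0<..} x =
      ennreal (A (s / lam) / lam) * (ennreal (?K x) * indicator {0<..} x)" for x
  proof (cases "x > 0")
    case True
    have "fY (s * x / lam) = A (s / lam) * B x * ((p + q * s * x / lam) * exp (- s * x))"
      using decomposition[of "s / lam" x] C_eq[of "s / lam * x"] True \<open>s > 0\<close> \<open>lam > 0\<close> by simp
    then have pointwise: "fX x * fY (s * x / lam) * (x / lam) = A (s / lam) / lam * ?K x"
      using h_eq[OF True] \<open>lam > 0\<close> by (simp add: field_simps power2_eq_square)
    have "?K x \<ge> 0"
      using True h_nonneg \<open>p \<ge> 0\<close> \<open>q > 0\<close> \<open>lam > 0\<close> \<open>s > 0\<close> by simp
    then have "ennreal (fX x * fY (s * x / lam) * (x / lam)) = ennreal (A (s / lam) / lam) * ennreal (?K x)"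
      unfolding pointwise using A by (intro ennreal_mult) auto
    then show ?thesis
      using True by simp
  qed simp
  then show ?thesis
    by (simp add: nn_integral_cmult)
qed

lemma decomposed_ratio_identity:
  fixes fX fY fZ A B C h :: "real \<Rightarrow> real" and p q lam :: real
  assumes ratio: "AE s in lborel. s > 0 \<longrightarrow>
      (\<integral>\<^sup>+x. ennreal (fX x * fY (s * x / lam) * (x / lam)) * indicator {0<..} x \<partial>lborel) =
      ennreal (fZ (lam / (s + lam)) * (lam / (s + lam)\<^sup>2))"
    and fZ_nonneg: "\<And>x. fZ x \<ge> 0" and A_pos: "\<And>s. s > 0 \<Longrightarrow> A s > 0"
    and decomposition: "\<And>s x. s > 0 \<Longrightarrow> x > 0 \<Longrightarrow> fY (s * x) = A s * B x * C (s * x)"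
    and C_eq: "\<And>x. x > 0 \<Longrightarrow> C x = (p + q * x) * exp (- lam * x)"
    and [measurable]: "h \<in> borel_measurable borel"
    and h_eq: "\<And>x. x > 0 \<Longrightarrow> h x = B x * fX x" and h_nonneg: "\<And>x. x > 0 \<Longrightarrow> h x \<ge> 0"
    and "p \<ge> 0" "q > 0" "lam > 0"
  shows "AE s in lborel. s > 0 \<longrightarrow>
      (\<integral>\<^sup>+x. ennreal (exp (- s * x) * (p * x * h x + q / lam * s * (x\<^sup>2 * h x))) * indicator {0<..} x \<partial>lborel) =
      ennreal (lam\<^sup>2 * (1 / (A (s / lam) * (s + lam)\<^sup>2) * fZ (lam / (s + lam))))"
  using ratio
proof eventually_elim
  case (elim s)
  show ?case
  proof
    assume "s > 0"
    have "A (s / lam) > 0" "s + lam \<noteq> 0"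
      using A_pos \<open>lam > 0\<close> \<open>s > 0\<close> by simp_all
    have "ennreal (A (s / lam) / lam) *
        (\<integral>\<^sup>+x. ennreal (exp (- s * x) * (p * x * h x + q / lam * s * (x\<^sup>2 * h x))) * indicator {0<..} x \<partial>lborel) =
        (\<integral>\<^sup>+x. ennreal (fX x * fY (s * x / lam) * (x / lam)) * indicator {0<..} x \<partial>lborel)"
      by (rule nn_integral_decomposed_ratio[OF decomposition C_eq A_pos _ h_eq h_nonneg assms(9-11) \<open>s > 0\<close>,
            symmetric]) measurable
    also have "\<dots> = ennreal (fZ (lam / (s + lam)) * (lam / (s + lam)\<^sup>2))"
      using elim \<open>s > 0\<close> by simp
    also have "fZ (lam / (s + lam)) * (lam / (s + lam)\<^sup>2) =
        A (s / lam) / lam * (lam\<^sup>2 * (1 / (A (s / lam) * (s + lam)\<^sup>2) * fZ (lam / (s + lam))))"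
      using \<open>A (s / lam) > 0\<close> \<open>s + lam \<noteq> 0\<close> \<open>lam > 0\<close> by (simp add: field_simps) (simp add: power2_eq_square)
    also have "ennreal \<dots> = ennreal (A (s / lam) / lam) *
        ennreal (lam\<^sup>2 * (1 / (A (s / lam) * (s + lam)\<^sup>2) * fZ (lam / (s + lam))))"
      using \<open>A (s / lam) > 0\<close> fZ_nonneg[of "lam / (s + lam)"] \<open>lam > 0\<close> by (intro ennreal_mult) auto
    finally show "(\<integral>\<^sup>+x. ennreal (exp (- s * x) * (p * x * h x + q / lam * s * (x\<^sup>2 * h x))) *
        indicator {0<..} x \<partial>lborel) = ennreal (lam\<^sup>2 * (1 / (A (s / lam) * (s + lam)\<^sup>2) * fZ (lam / (s + lam))))"
      using \<open>A (s / lam) > 0\<close> \<open>lam > 0\<close> by (simp add: ennreal_mult_cancel_left)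
  qed
qed

theorem theorem2:
  fixes M :: "'a measure"
    and X Y Z :: "'a \<Rightarrow> real"
    and fX fY fZ :: "real \<Rightarrow> real"
    and A B C :: "real \<Rightarrow> real"
    and p q lam :: real
    and g :: "real \<Rightarrow> real"
  assumes "prob_space M"
    and "\<And>x. fX x \<ge> 0" and "\<And>x. fY x \<ge> 0" and "\<And>x. fZ x \<ge> 0"
    and "distributed M lborel X (\<lambda>x. ennreal (fX x))"
    and "distributed M lborel Y (\<lambda>x. ennreal (fY x))"
    and "distributed M lborel Z (\<lambda>x. ennreal (fZ x))"
    and "AE \<omega> in M. X \<omega> > 0" and "AE \<omega> in M. Y \<omega> > 0" and "AE \<omega> in M. Z \<omega> > 0"
    and "prob_space.indep_var M borel X borel Y"
    and "distr M borel Z = distr M borel (\<lambda>\<omega>. X \<omega> / (X \<omega> + Y \<omega>))"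
    and "\<And>x. x > 0 \<Longrightarrow> A x > 0" and "\<And>x. x > 0 \<Longrightarrow> B x > 0" and "\<And>x. x > 0 \<Longrightarrow> C x > 0"
    and "\<And>s x. s > 0 \<Longrightarrow> x > 0 \<Longrightarrow> fY (s * x) = A s * B x * C (s * x)"
    and "q > 0" and "lam > 0" and "p \<ge> 0"
    and "\<And>x. x > 0 \<Longrightarrow> C x = (p + q * x) * exp (- lam * x)"
    and "((\<lambda>x. x powr (lam * p / q + 2) * B x * fX x) \<longlongrightarrow> 0) (at_right 0)"
    and "has_laplace g (\<lambda>s. 1 / (A (s / lam) * (s + lam)\<^sup>2) * fZ (lam / (s + lam)))"
  shows "AE x in lborel. x > 0 \<longrightarrow>
           fX x = lam ^ 3 / (q * x powr (lam * p / q + 2) * B x) *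
                  (LINT \<xi>:{0<..x}|lborel. \<xi> powr (lam * p / q) * g \<xi>)"
proof -
  have [measurable]: "fX \<in> borel_measurable borel" "fY \<in> borel_measurable borel"
    using assms(2,3,5,6) by (auto simp: distributed_def)
  \<comment> \<open>\<open>B\<close> itself need not be measurable, but on \<open>(0, \<infinity>)\<close> the decomposition at \<open>s = 1\<close> expresses it through \<open>fY\<close>\<close>
  define h where "h x = fY x / (A 1 * ((p + q * x) * exp (- lam * x))) * fX x" for x
  have [measurable]: "h \<in> borel_measurable borel"
    unfolding h_def by measurable
  have h_eq: "h x = B x * fX x" if "x > 0" for x
  proof -
    have "p + q * x > 0"
      using assms(17,19) that by (simp add: add_nonneg_pos)
    then show ?thesis
      using assms(16)[of 1 x] assms(20)[OF that] assms(13)[of 1] that by (simp add: h_def)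
  qed
  have h_nonneg: "h x \<ge> 0" if "x > 0" for x
    using h_eq[OF that] assms(14)[OF that] assms(2)[of x] by simp
  have identity: "AE s in lborel. s > 0 \<longrightarrow>
      (\<integral>\<^sup>+x. ennreal (exp (- s * x) * (p * x * h x + q / lam * s * (x\<^sup>2 * h x))) * indicator {0<..} x \<partial>lborel) =
      ennreal (lam\<^sup>2 * (1 / (A (s / lam) * (s + lam)\<^sup>2) * fZ (lam / (s + lam))))"
    using ratio_densities_AE_eq[OF assms(1-9,11,12,18)]
    by (rule decomposed_ratio_identity[OF _ assms(4,13,16,20) _ h_eq h_nonneg assms(19,17,18)]) measurable
  have "AE x in lborel. x > 0 \<longrightarrow> x powr (lam * p / q + 2) * h x =
      lam ^ 3 / q * (LINT \<xi>:{0<..x}|lborel. \<xi> powr (lam * p / q) * g \<xi>)"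
  proof (rule laplace_identity_solution[OF _ h_nonneg assms(19,17,18,22) _ identity])
    fix s :: real
    assume "s > 0"
    then have "A (s / lam) * (s + lam)\<^sup>2 > 0"
      using assms(13,18) by (intro mult_pos_pos) auto
    then show "1 / (A (s / lam) * (s + lam)\<^sup>2) * fZ (lam / (s + lam)) \<ge> 0"
      using assms(4) by simp
  qed simp
  then show ?thesis
  proof eventually_elim
    case (elim x)
    show ?case
    proof
      assume "x > 0"
      define P where "P = x powr (lam * p / q + 2)"
      have "P > 0" "B x > 0"
        using \<open>x > 0\<close> assms(14) by (simp_all add: P_def)
      then show "fX x = lam ^ 3 / (q * x powr (lam * p / q + 2) * B x) *
          (LINT \<xi>:{0<..x}|lborel. \<xi> powr (lam * p / q) * g \<xi>)"
        using elim \<open>x > 0\<close> h_eq[OF \<open>x > 0\<close>] assms(17) unfolding P_def[symmetric]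
        by (simp add: field_simps)
    qed
  qed
qed

end
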